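(* Suppose $\|\phi_0\|_{L^2(P_0;\mathcal{H})}<\infty$ and $\|\phi_n^j-\phi_0\|_{L^2(P_0;\mathcal{H})}=o_p(1)$ for each $j\in\{1,2\}$. Let $\Sigma_n:\mathcal{H}\to\mathcal{H}$ be $\Sigma_n(h)=\frac12\sum_{j=1}^2E_{P_n^j}[\langle h,\phi_n^j(Z)\rangle_{\mathcal{H}}\phi_n^j(Z)]$ and $\Sigma_0(h)=E_0[\langle h,\phi_0(Z)\rangle_{\mathcal{H}}\phi_0(Z)]$. Then $\|\Sigma_n-\Sigma_0\|_{\mathrm{op}}=o_p(1)$.
   Context: $(\mathcal{Z},\mathbf{B})$ is a Polish space, $\mathcal{H}$ a real separable Hilbert space, $P_0$ a distribution on $\mathcal{Z}$, $\phi_0:\mathcal{Z}\to\mathcal{H}$ Bochner measurable (in the paper, the efficient influence function of a pathwise differentiable parameter at $P_0$, so that $\Sigma_0$ is the covariance operator of the associated Gaussian limit). $L^2(P;\mathcal{H})$-norm: $\|f\|^2=\int\|f\|_{\mathcal{H}}^2dP$. Cross-fitting: $n$ even, $Z_1,\dots,Z_n$ iid $P_0$; $P_n^1$ is the empirical distribution of $Z_{n/2+1},\dots,Z_n$ and $P_n^2$ that of $Z_1,\dots,Z_{n/2}$; $\phi_n^1:\mathcal{Z}\to\mathcal{H}$ is a (Bochner measurable) function determined by $Z_1,\dots,Z_{n/2}$ and $\phi_n^2$ one determined by $Z_{n/2+1},\dots,Z_n$ (in the paper, the efficient influence functions at estimates $\widehat{P}_n^j$ of $P_0$ fit on those halves).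 $\|\cdot\|_{\mathrm{op}}$ is the operator norm. *)

theory Defs
  imports "HOL-Probability.Probability"
begin

definition outer_prob :: "'a measure \<Rightarrow> 'a set \<Rightarrow> real" where
  "outer_prob M A = Inf {measure M B | B. B \<in> sets M \<and> A \<subseteq> B}"

text \<open>X m = o_p(1) as m tends to infinity (for [0,\<infinity>]-valued random quantities),
  using outer probability so that no measurability is presupposed.\<close>
definition op_one :: "'a measure \<Rightarrow> (nat \<Rightarrow> 'a \<Rightarrow> ennreal) \<Rightarrow> bool" where
  "op_one M X \<longleftrightarrow>
     (\<forall>e::real. e > 0 \<longrightarrow>
        (\<lambda>m. outer_prob M {\<omega> \<in> space M. ennreal e < X m \<omega>}) \<longlonglongrightarrow> 0)"

definition L2norm :: "'z measure \<Rightarrow> ('z \<Rightarrow> 'h::real_normed_vector) \<Rightarrow> ennreal" where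
  "L2norm P f = (let I = (\<integral>\<^sup>+ z. ennreal ((norm (f z))\<^sup>2) \<partial>P)
                  in if I = \<infinity> then \<infinity> else ennreal (sqrt (enn2real I)))"

text \<open>Cross-fitted covariance operator estimate with sample size n = 2m.
  P_n^1 = empirical distribution of the second half, P_n^2 of the first half.\<close>
definition Sigma_n :: "nat \<Rightarrow> (nat \<Rightarrow> nat \<Rightarrow> (nat \<Rightarrow> 'z) \<Rightarrow> 'z \<Rightarrow> 'h::real_inner)
                        \<Rightarrow> (nat \<Rightarrow> 'z) \<Rightarrow> 'h \<Rightarrow> 'h" where
  "Sigma_n m phi x h =
     (1/2) *\<^sub>R
       ( (1 / real m) *\<^sub>R (\<Sum>i\<in>{m..<2*m}. (inner h (phi m 1 x (x i))) *\<^sub>R phi m 1 x (x i))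
       + (1 / real m) *\<^sub>R (\<Sum>i\<in>{0..<m}. (inner h (phi m 2 x (x i))) *\<^sub>R phi m 2 x (x i)))"

definition Sigma_0 :: "'z measure \<Rightarrow> ('z \<Rightarrow> 'h::{real_inner,banach,second_countable_topology}) \<Rightarrow> 'h \<Rightarrow> 'h" where
  "Sigma_0 P phi0 h = (\<integral> z. (inner h (phi0 z)) *\<^sub>R phi0 z \<partial>P)"

end

theory Submission
  imports Defs
begin

(* Writing T v = <., v> v, each half of the cross-fitted estimate differs from Sigma_0 by
   [P_n^j T(phi_n^j) - P_n^j T(phi_0)] + [P_n^j T(phi_0) - P_0 T(phi_0)].
   Since ||T a - T b|| <= (1 + 1/t) |a - b|^2 + t |b|^2 for every t > 0, the first bracket is at most
   (1 + 1/t) P_n^j |phi_n^j - phi_0|^2 + t P_n^j |phi_0|^2.  As phi_n^j is fitted on the other half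
   of the sample, Markov's inequality conditionally on that half bounds the first average by the
   L^2(P_0) error, which is o_p(1); the second average is O_p(1) and t is arbitrary.  The second
   bracket is a law of large numbers in operator norm: after approximating phi_0 in L^2(P_0) by a
   simple function psi, the error phi_0 - psi is handled as before, and for psi the empirical
   operator is a finite combination of empirical frequencies, which converge by Chebyshev's
   inequality. *)

section \<open>Outer probability and convergence in probability\<close>

lemma outer_prob_le_measure:
  assumes "B \<in> sets M" "A \<subseteq> B"
  shows "outer_prob M A \<le> measure M B"
  unfolding outer_prob_def
  by (rule cInf_lower) (use assms in \<open>auto intro!: bdd_belowI[where m=0]\<close>)

lemma outer_prob_nonneg:
  assumes "A \<subseteq> space M"
  shows "0 \<le> outer_prob M A"
  unfolding outer_prob_def
  by (rule cInf_greatest) (use assms in auto)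

lemma outer_prob_eq_measure:
  assumes "finite_measure M" "A \<in> sets M"
  shows "outer_prob M A = measure M A"
proof (rule antisym)
  show "outer_prob M A \<le> measure M A"
    by (rule outer_prob_le_measure[OF assms(2)]) simp
  show "measure M A \<le> outer_prob M A"
    unfolding outer_prob_def
    by (rule cInf_greatest) (use assms in \<open>auto intro: finite_measure.finite_measure_mono\<close>)
qed

lemma outer_prob_mono:
  assumes "A \<subseteq> B" "B \<subseteq> space M"
  shows "outer_prob M A \<le> outer_prob M B"
  unfolding outer_prob_def
  by (rule cInf_superset_mono) (use assms in \<open>auto intro!: bdd_belowI[where m=0]\<close>)

lemma outer_prob_Un_le:
  assumes "A \<subseteq> space M" "B \<subseteq> space M"
  shows "outer_prob M (A \<union> B) \<le> outer_prob M A + outer_prob M B"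
proof (rule field_le_epsilon)
  fix \<epsilon> :: real assume "0 < \<epsilon>"
  have cover: "\<exists>C\<in>sets M. S \<subseteq> C \<and> measure M C < outer_prob M S + \<epsilon> / 2" if "S \<subseteq> space M" for S
  proof -
    have "Inf {measure M C | C. C \<in> sets M \<and> S \<subseteq> C} < outer_prob M S + \<epsilon> / 2"
      using \<open>0 < \<epsilon>\<close> by (simp add: outer_prob_def)
    from cInf_lessD[OF _ this] show ?thesis
      using that by blast
  qed
  obtain CA CB where CA: "CA \<in> sets M" "A \<subseteq> CA" "measure M CA < outer_prob M A + \<epsilon> / 2"
    and CB: "CB \<in> sets M" "B \<subseteq> CB" "measure M CB < outer_prob M B + \<epsilon> / 2"
    using cover assms by meson
  have "outer_prob M (A \<union> B) \<le> measure M (CA \<union> CB)"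
    using CA CB by (intro outer_prob_le_measure) auto
  also have "\<dots> \<le> measure M CA + measure M CB"
    using CA CB by (intro measure_Un_le)
  finally show "outer_prob M (A \<union> B) \<le> outer_prob M A + outer_prob M B + \<epsilon>"
    using CA CB by linarith
qed

lemma op_oneI:
  assumes "\<And>e \<eta>. 0 < e \<Longrightarrow> 0 < \<eta> \<Longrightarrow>
    eventually (\<lambda>m. outer_prob M {x\<in>space M. ennreal e < X m x} \<le> \<eta>) sequentially"
  shows "op_one M X"
  unfolding op_one_def
proof (intro allI impI order_tendstoI)
  fix e a :: real assume "0 < e"
  show "eventually (\<lambda>m. a < outer_prob M {x\<in>space M. ennreal e < X m x}) sequentially" if "a < 0"
  proof (intro always_eventually allI)
    fix m
    have "0 \<le> outer_prob M {x\<in>space M. ennreal e < X m x}"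
      by (rule outer_prob_nonneg) auto
    then show "a < outer_prob M {x\<in>space M. ennreal e < X m x}"
      using that by linarith
  qed
  show "eventually (\<lambda>m. outer_prob M {x\<in>space M. ennreal e < X m x} < a) sequentially" if "0 < a"
    using assms[OF \<open>0 < e\<close>, of "a / 2"] that by (auto elim: eventually_mono)
qed

lemma op_oneD:
  assumes "op_one M X" "0 < e" "0 < \<eta>"
  shows "eventually (\<lambda>m. outer_prob M {x\<in>space M. ennreal e < X m x} < \<eta>) sequentially"
proof -
  have "(\<lambda>m. outer_prob M {x\<in>space M. ennreal e < X m x}) \<longlonglongrightarrow> 0"
    using assms(1,2) unfolding op_one_def by blast
  from order_tendstoD(2)[OF this assms(3)] show ?thesis .
qed

lemma op_one_add:
  assumes Y: "op_one M Y" and Z: "op_one M Z"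
    and le: "\<And>m x. x \<in> space M \<Longrightarrow> X m x \<le> Y m x + Z m x"
  shows "op_one M X"
proof (rule op_oneI)
  fix e \<eta> :: real assume "0 < e" "0 < \<eta>"
  let ?Y = "\<lambda>m. {x\<in>space M. ennreal (e / 2) < Y m x}"
  let ?Z = "\<lambda>m. {x\<in>space M. ennreal (e / 2) < Z m x}"
  have "{x\<in>space M. ennreal e < X m x} \<subseteq> ?Y m \<union> ?Z m" for m
  proof (rule subsetI, rule ccontr)
    fix x assume x: "x \<in> {x\<in>space M. ennreal e < X m x}" and "x \<notin> ?Y m \<union> ?Z m"
    then have "X m x \<le> ennreal (e / 2) + ennreal (e / 2)"
      using le[of x m] by (auto simp: not_less intro: order_trans add_mono)
    also have "\<dots> = ennreal e"
      using \<open>0 < e\<close> by (simp flip: ennreal_plus)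
    finally show False using x by (auto dest: leD)
  qed
  then have bound: "outer_prob M {x\<in>space M. ennreal e < X m x} \<le> outer_prob M (?Y m) + outer_prob M (?Z m)" for m
    by (intro order_trans[OF outer_prob_mono outer_prob_Un_le]) auto
  have "eventually (\<lambda>m. outer_prob M (?Y m) < \<eta> / 2) sequentially"
    using \<open>0 < e\<close> \<open>0 < \<eta>\<close> by (intro op_oneD[OF Y]) auto
  moreover have "eventually (\<lambda>m. outer_prob M (?Z m) < \<eta> / 2) sequentially"
    using \<open>0 < e\<close> \<open>0 < \<eta>\<close> by (intro op_oneD[OF Z]) auto
  ultimately show "eventually (\<lambda>m. outer_prob M {x\<in>space M. ennreal e < X m x} \<le> \<eta>) sequentially"
    by eventually_elim (rule order_trans[OF bound], linarith)
qed

lemma ennreal_less_L2norm_iff: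
  fixes f :: "'z \<Rightarrow> 'h::real_normed_vector"
  assumes "0 \<le> s"
  shows "ennreal s < L2norm P f \<longleftrightarrow> ennreal (s\<^sup>2) < (\<integral>\<^sup>+z. ennreal ((norm (f z))\<^sup>2) \<partial>P)"
proof (cases "(\<integral>\<^sup>+z. ennreal ((norm (f z))\<^sup>2) \<partial>P) = \<infinity>")
  case True
  then show ?thesis
    by (simp add: L2norm_def)
next
  case False
  then obtain q where q: "(\<integral>\<^sup>+z. ennreal ((norm (f z))\<^sup>2) \<partial>P) = ennreal q" "0 \<le> q"
    by (cases "(\<integral>\<^sup>+z. ennreal ((norm (f z))\<^sup>2) \<partial>P)") auto
  have "ennreal s < L2norm P f \<longleftrightarrow> s < sqrt q"
    using q assms False by (simp add: L2norm_def Let_def ennreal_less_iff)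
  also have "\<dots> \<longleftrightarrow> sqrt (s\<^sup>2) < sqrt q"
    using assms by simp
  also have "\<dots> \<longleftrightarrow> ennreal (s\<^sup>2) < ennreal q"
    by (simp only: real_sqrt_less_iff ennreal_less_iff[OF zero_le_power2])
  finally show ?thesis
    using q by simp
qed

lemma integrable_power2_norm_if_L2norm_finite:
  fixes f :: "'z \<Rightarrow> 'h::{real_normed_vector, second_countable_topology}"
  assumes [measurable]: "f \<in> borel_measurable M" and "L2norm M f < \<infinity>"
  shows "integrable M (\<lambda>z. (norm (f z))\<^sup>2)"
proof (rule integrableI_bounded)
  show "(\<integral>\<^sup>+z. ennreal (norm ((norm (f z))\<^sup>2)) \<partial>M) < \<infinity>"
    using assms(2) by (auto simp: L2norm_def Let_def top.not_eq_extremum split: if_splits)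
qed measurable

lemma op_one_L2normD:
  fixes F :: "nat \<Rightarrow> 'a \<Rightarrow> 'z \<Rightarrow> 'h::real_normed_vector"
  assumes M: "finite_measure M" and "op_one M (\<lambda>m x. L2norm P (F m x))"
    and [measurable]: "\<And>m. (\<lambda>x. \<integral>\<^sup>+z. ennreal ((norm (F m x z))\<^sup>2) \<partial>P) \<in> borel_measurable M"
    and "0 < \<delta>"
  shows "(\<lambda>m. measure M {x\<in>space M. ennreal \<delta> < (\<integral>\<^sup>+z. ennreal ((norm (F m x z))\<^sup>2) \<partial>P)}) \<longlonglongrightarrow> 0"
proof -
  have "(\<lambda>m. outer_prob M {x\<in>space M. ennreal (sqrt \<delta>) < L2norm P (F m x)}) \<longlonglongrightarrow> 0"
    using assms(2,4) unfolding op_one_def by simp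
  moreover have "outer_prob M {x\<in>space M. ennreal (sqrt \<delta>) < L2norm P (F m x)}
      = measure M {x\<in>space M. ennreal \<delta> < (\<integral>\<^sup>+z. ennreal ((norm (F m x z))\<^sup>2) \<partial>P)}" for m
    using \<open>0 < \<delta>\<close> by (simp add: ennreal_less_L2norm_iff outer_prob_eq_measure[OF M])
  ultimately show ?thesis
    by simp
qed

section \<open>Empirical means of an i.i.d. sequence\<close>

definition emp_mean :: "nat set \<Rightarrow> ('z \<Rightarrow> 'a::real_vector) \<Rightarrow> (nat \<Rightarrow> 'z) \<Rightarrow> 'a" where
  "emp_mean I g x = (1 / real (card I)) *\<^sub>R (\<Sum>i\<in>I. g (x i))"

lemma emp_mean_nonneg:
  fixes g :: "'z \<Rightarrow> real"
  assumes "\<And>z. 0 \<le> g z"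
  shows "0 \<le> emp_mean I g x"
  using assms by (simp add: emp_mean_def sum_nonneg)

lemma borel_measurable_emp_mean:
  fixes G :: "(nat \<Rightarrow> 'z) \<Rightarrow> 'z \<Rightarrow> 'a::{real_normed_vector, second_countable_topology}"
  assumes G: "(\<lambda>(x, z). G x z) \<in> borel_measurable (PiM UNIV (\<lambda>_. M) \<Otimes>\<^sub>M M)"
  shows "(\<lambda>x. emp_mean I (G x) x) \<in> borel_measurable (PiM UNIV (\<lambda>_. M))"
proof -
  have "(\<lambda>(x, z). G x z) \<circ> (\<lambda>x. (x, x i)) \<in> borel_measurable (PiM UNIV (\<lambda>_. M))" for i
    by (rule measurable_comp[OF _ G]) measurable
  then show ?thesis
    unfolding emp_mean_def by (intro borel_measurable_scaleR borel_measurable_sum) (auto simp: comp_def)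
qed

lemma nn_integral_PiM_fresh_coordinate:
  fixes M :: "'z measure" and F :: "(nat \<Rightarrow> 'z) \<times> 'z \<Rightarrow> ennreal"
  assumes M: "prob_space M" and "i \<notin> J"
    and F[measurable]: "F \<in> borel_measurable (PiM UNIV (\<lambda>_. M) \<Otimes>\<^sub>M M)"
    and F_dep: "\<And>x y z. \<forall>k\<in>J. x k = y k \<Longrightarrow> F (x, z) = F (y, z)"
  shows "(\<integral>\<^sup>+x. F (x, x i) \<partial>PiM UNIV (\<lambda>_. M)) = (\<integral>\<^sup>+x. \<integral>\<^sup>+z. F (x, z) \<partial>M \<partial>PiM UNIV (\<lambda>_. M))"
proof -
  let ?P = "PiM (UNIV::nat set) (\<lambda>_. M)"
  interpret P: prob_space ?P using M by (intro prob_space_PiM) auto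
  interpret M: prob_space M by fact
  interpret pair_sigma_finite M ?P by unfold_locales
  have upd_meas: "(\<lambda>(z, x). x(i := z)) \<in> measurable (M \<Otimes>\<^sub>M ?P) ?P"
    using measurable_fun_upd[of UNIV UNIV i snd "M \<Otimes>\<^sub>M ?P" "\<lambda>_. M" fst]
    by (simp add: case_prod_beta')
  have "(\<integral>\<^sup>+x. F (x, x i) \<partial>?P) = (\<integral>\<^sup>+x. F (x, x i) \<partial>distr (M \<Otimes>\<^sub>M ?P) ?P (\<lambda>(z, x). x(i := z)))"
    using distr_pair_PiM_eq_PiM[of UNIV "\<lambda>_. M" i] M by simp
  also have "\<dots> = (\<integral>\<^sup>+p. F ((snd p)(i := fst p), fst p) \<partial>(M \<Otimes>\<^sub>M ?P))"
    by (subst nn_integral_distr[OF upd_meas]) (auto simp: case_prod_beta')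
  also have "\<dots> = (\<integral>\<^sup>+p. F (snd p, fst p) \<partial>(M \<Otimes>\<^sub>M ?P))"
    using \<open>i \<notin> J\<close> by (intro nn_integral_cong) (metis F_dep fun_upd_other)
  also have "\<dots> = (\<integral>\<^sup>+x. \<integral>\<^sup>+z. F (x, z) \<partial>M \<partial>?P)"
    by (subst nn_integral_snd[symmetric]) (auto simp: case_prod_beta')
  finally show ?thesis .
qed

lemma nn_integral_emp_mean:
  fixes G :: "(nat \<Rightarrow> 'z) \<Rightarrow> 'z \<Rightarrow> real"
  assumes M: "prob_space M" and I: "finite I" "I \<noteq> {}" "I \<inter> J = {}"
    and G: "(\<lambda>(x, z). G x z) \<in> borel_measurable (PiM UNIV (\<lambda>_. M) \<Otimes>\<^sub>M M)"
    and G_nonneg: "\<And>x z. 0 \<le> G x z"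
    and G_dep: "\<And>x y. \<forall>k\<in>J. x k = y k \<Longrightarrow> G x = G y"
  shows "(\<integral>\<^sup>+x. ennreal (emp_mean I (G x) x) \<partial>PiM UNIV (\<lambda>_. M))
       = (\<integral>\<^sup>+x. \<integral>\<^sup>+z. ennreal (G x z) \<partial>M \<partial>PiM UNIV (\<lambda>_. M))"
proof -
  let ?P = "PiM (UNIV::nat set) (\<lambda>_. M)"
  let ?c = "ennreal (1 / real (card I))"
  have G_eval: "(\<lambda>x. G x (x i)) \<in> borel_measurable ?P" for i
    using measurable_comp[OF _ G, of "\<lambda>x. (x, x i)"] by (simp add: comp_def)
  have G_pair: "(\<lambda>p. ennreal (G (fst p) (snd p))) \<in> borel_measurable (?P \<Otimes>\<^sub>M M)"
    using G by (simp add: case_prod_beta')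
  have each: "(\<integral>\<^sup>+x. ennreal (G x (x i)) \<partial>?P) = (\<integral>\<^sup>+x. \<integral>\<^sup>+z. ennreal (G x z) \<partial>M \<partial>?P)"
    if "i \<in> I" for i
  proof -
    have "i \<notin> J"
      using that I by auto
    moreover have "ennreal (G (fst (x, z)) (snd (x, z))) = ennreal (G (fst (y, z)) (snd (y, z)))"
      if "\<forall>k\<in>J. x k = y k" for x y z
      using G_dep[OF that] by simp
    ultimately show ?thesis
      using nn_integral_PiM_fresh_coordinate[OF M _ G_pair] by simp
  qed
  have "(\<integral>\<^sup>+x. ennreal (emp_mean I (G x) x) \<partial>?P) = (\<integral>\<^sup>+x. ?c * (\<Sum>i\<in>I. ennreal (G x (x i))) \<partial>?P)"
    using G_nonneg by (intro nn_integral_cong) (simp add: emp_mean_def sum_nonneg flip: ennreal_mult)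
  also have "\<dots> = ?c * (\<Sum>i\<in>I. \<integral>\<^sup>+x. ennreal (G x (x i)) \<partial>?P)"
    using G_eval by (simp add: nn_integral_cmult nn_integral_sum)
  also have "\<dots> = ?c * of_nat (card I) * (\<integral>\<^sup>+x. \<integral>\<^sup>+z. ennreal (G x z) \<partial>M \<partial>?P)"
    using each by (simp add: mult.assoc)
  also have "?c * of_nat (card I) = 1"
    using I by (simp add: ennreal_of_nat_eq_real_of_nat flip: ennreal_mult)
  finally show ?thesis by simp
qed

lemma Markov_inequality_nn_integral:
  fixes g :: "'a \<Rightarrow> real"
  assumes M: "finite_measure M" and [measurable]: "g \<in> borel_measurable M"
    and "\<And>x. 0 \<le> g x" and "(\<integral>\<^sup>+x. ennreal (g x) \<partial>M) \<le> ennreal r" and "0 \<le> r" "0 < c"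
  shows "measure M {x\<in>space M. c < g x} \<le> r / c"
proof -
  interpret finite_measure M by fact
  have "emeasure M {x\<in>space M. c < g x} \<le> emeasure M {x\<in>space M. 1 \<le> ennreal (1/c) * ennreal (g x)}"
    using assms by (intro emeasure_mono) (auto simp: field_simps simp flip: ennreal_mult)
  also have "\<dots> \<le> ennreal (1/c) * (\<integral>\<^sup>+x. ennreal (g x) * indicator (space M) x \<partial>M)"
    by (rule nn_integral_Markov_inequality) auto
  also have "(\<integral>\<^sup>+x. ennreal (g x) * indicator (space M) x \<partial>M) = (\<integral>\<^sup>+x. ennreal (g x) \<partial>M)"
    by (intro nn_integral_cong) auto
  also have "ennreal (1/c) * \<dots> \<le> ennreal (1/c) * ennreal r"
    using assms by (intro mult_left_mono) auto
  also have "\<dots> = ennreal (r / c)"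
    using assms by (simp flip: ennreal_mult)
  finally show ?thesis
    using assms by (simp add: emeasure_eq_measure)
qed

text \<open>Markov's inequality conditionally on the coordinates in \<open>J\<close>: after truncating to the event
  where the conditional mean \<open>\<integral>\<^sup>+z. G x z\<close> is at most \<open>d\<close>, the average has mean at most \<open>d\<close>.\<close>
lemma measure_emp_mean_gt_le:
  fixes G :: "(nat \<Rightarrow> 'z) \<Rightarrow> 'z \<Rightarrow> real"
  assumes M: "prob_space M" and I: "finite I" "I \<noteq> {}" "I \<inter> J = {}"
    and G[measurable]: "(\<lambda>(x, z). G x z) \<in> borel_measurable (PiM UNIV (\<lambda>_. M) \<Otimes>\<^sub>M M)"
    and G_nonneg: "\<And>x z. 0 \<le> G x z"
    and G_dep: "\<And>x y. \<forall>k\<in>J. x k = y k \<Longrightarrow> G x = G y"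
    and "0 < c" "0 \<le> d"
  shows "measure (PiM UNIV (\<lambda>_. M)) {x\<in>space (PiM UNIV (\<lambda>_. M)). c < emp_mean I (G x) x}
     \<le> measure (PiM UNIV (\<lambda>_. M)) {x\<in>space (PiM UNIV (\<lambda>_. M)). ennreal d < (\<integral>\<^sup>+z. ennreal (G x z) \<partial>M)}
       + d / c"
proof -
  let ?P = "PiM (UNIV::nat set) (\<lambda>_. M)"
  interpret P: prob_space ?P using M by (intro prob_space_PiM) auto
  interpret M: prob_space M by fact
  define N where "N x = (\<integral>\<^sup>+z. ennreal (G x z) \<partial>M)" for x
  have "(\<lambda>p. ennreal (G (fst p) (snd p))) \<in> borel_measurable (?P \<Otimes>\<^sub>M M)"
    using G by (simp add: case_prod_beta')
  from M.borel_measurable_nn_integral_fst[OF this]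
  have [measurable]: "N \<in> borel_measurable ?P"
    unfolding N_def by simp
  define G' where "G' x z = (if N x \<le> ennreal d then G x z else 0)" for x z
  have G'_meas: "(\<lambda>(x, z). G' x z) \<in> borel_measurable (?P \<Otimes>\<^sub>M M)"
    unfolding G'_def by measurable
  have G'_nonneg: "0 \<le> G' x z" for x z
    by (simp add: G'_def G_nonneg)
  have G'_mean_meas[measurable]: "(\<lambda>x. emp_mean I (G' x) x) \<in> borel_measurable ?P"
    by (rule borel_measurable_emp_mean[OF G'_meas])
  have G'_dep: "G' x = G' y" if "\<forall>k\<in>J. x k = y k" for x y
    unfolding G'_def N_def G_dep[OF that] ..
  have "(\<integral>\<^sup>+x. ennreal (emp_mean I (G' x) x) \<partial>?P) = (\<integral>\<^sup>+x. \<integral>\<^sup>+z. ennreal (G' x z) \<partial>M \<partial>?P)"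
    by (rule nn_integral_emp_mean[OF M I G'_meas G'_nonneg G'_dep])
  also have "\<dots> \<le> (\<integral>\<^sup>+x. ennreal d \<partial>?P)"
  proof (rule nn_integral_mono)
    show "(\<integral>\<^sup>+z. ennreal (G' x z) \<partial>M) \<le> ennreal d" for x
      by (cases "N x \<le> ennreal d") (simp_all add: G'_def flip: N_def)
  qed
  also have "\<dots> = ennreal d"
    by (simp add: P.emeasure_space_1)
  finally have truncated: "measure ?P {x\<in>space ?P. c < emp_mean I (G' x) x} \<le> d / c"
    using assms G'_nonneg
    by (intro Markov_inequality_nn_integral[OF P.finite_measure_axioms G'_mean_meas] emp_mean_nonneg)
  have "{x\<in>space ?P. c < emp_mean I (G x) x}
      \<subseteq> {x\<in>space ?P. ennreal d < N x} \<union> {x\<in>space ?P. c < emp_mean I (G' x) x}"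
  proof (rule subsetI)
    fix x assume "x \<in> {x\<in>space ?P. c < emp_mean I (G x) x}"
    moreover have "G' x = G x" if "N x \<le> ennreal d"
      using that by (simp add: G'_def fun_eq_iff)
    ultimately show "x \<in> {x\<in>space ?P. ennreal d < N x} \<union> {x\<in>space ?P. c < emp_mean I (G' x) x}"
      by (cases "N x \<le> ennreal d") auto
  qed
  then have "measure ?P {x\<in>space ?P. c < emp_mean I (G x) x}
      \<le> measure ?P ({x\<in>space ?P. ennreal d < N x} \<union> {x\<in>space ?P. c < emp_mean I (G' x) x})"
    by (intro P.finite_measure_mono) auto
  also have "\<dots> \<le> measure ?P {x\<in>space ?P. ennreal d < N x} + measure ?P {x\<in>space ?P. c < emp_mean I (G' x) x}"
    by (intro measure_Un_le) auto
  finally show ?thesis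
    using truncated by (simp add: N_def)
qed

lemma measure_emp_mean_gt_le_integral:
  fixes g :: "'z \<Rightarrow> real"
  assumes M: "prob_space M" and I: "finite I" "I \<noteq> {}"
    and [measurable]: "g \<in> borel_measurable M" and "integrable M g" and g_nonneg: "\<And>z. 0 \<le> g z"
    and "0 < c"
  shows "measure (PiM UNIV (\<lambda>_. M)) {x\<in>space (PiM UNIV (\<lambda>_. M)). c < emp_mean I g x} \<le> (\<integral>z. g z \<partial>M) / c"
proof -
  have "(\<integral>\<^sup>+z. ennreal (g z) \<partial>M) = ennreal (\<integral>z. g z \<partial>M)"
    using assms by (intro nn_integral_eq_integral) auto
  then show ?thesis
    using measure_emp_mean_gt_le[OF M I(1,2), of "{}" "\<lambda>_. g" c "\<integral>z. g z \<partial>M"] assms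
    by (simp add: integral_nonneg_AE)
qed

lemma integral_indicator_PiM_centred_orthogonal:
  fixes M :: "'z measure" and i k :: nat
  assumes M: "prob_space M" and [measurable]: "A \<in> sets M" and "i \<noteq> k"
  shows "(\<integral>x. (indicator A (x i) - measure M A) * (indicator A (x k) - measure M A)
      \<partial>PiM UNIV (\<lambda>_. M)) = (0::real)"
proof -
  let ?P = "PiM (UNIV::nat set) (\<lambda>_. M)"
  interpret P: prob_space ?P using M by (intro prob_space_PiM) auto
  interpret M: prob_space M by fact
  define p where "p = measure M A"
  define a where "a i x = (indicator A (x i) :: real)" for i and x :: "nat \<Rightarrow> 'z"
  have [measurable]: "a i \<in> borel_measurable ?P" for i
    unfolding a_def by measurable
  have p: "0 \<le> p"
    by (simp add: p_def)
  have a_int: "integrable ?P (a i)" "integrable ?P (\<lambda>x. a i x * a k x)" for i k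
    by (auto intro!: P.integrable_const_bound[where B=1] simp: a_def split: split_indicator)
  have nn_integral_a: "(\<integral>\<^sup>+x. indicator A (x k) \<partial>?P) = ennreal p" for k
    using nn_integral_PiM_fresh_coordinate[OF M, of k "{}" "\<lambda>q. indicator A (snd q)"]
    by (simp add: P.emeasure_space_1 M.emeasure_eq_measure p_def)
  have integral_a: "(\<integral>x. a i x \<partial>?P) = p" for i
    using nn_integral_a[of i] p
    by (subst integral_eq_nn_integral) (auto simp: a_def ennreal_indicator)
  have "(\<integral>\<^sup>+x. indicator A (x k) * indicator A (x i) \<partial>?P)
      = (\<integral>\<^sup>+x. indicator A (x k) * (\<integral>\<^sup>+z. indicator A z \<partial>M) \<partial>?P)"
    using nn_integral_PiM_fresh_coordinate[OF M, of i "{k}" "\<lambda>q. indicator A (fst q k) * indicator A (snd q)"]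
      \<open>i \<noteq> k\<close> by (simp add: nn_integral_cmult)
  also have "\<dots> = ennreal (p * p)"
    using p by (simp add: M.emeasure_eq_measure p_def nn_integral_multc nn_integral_a ennreal_mult)
  finally have integral_aa: "(\<integral>x. a i x * a k x \<partial>?P) = p * p"
    using p by (subst integral_eq_nn_integral)
      (auto simp: a_def mult.commute ennreal_mult' ennreal_indicator enn2real_mult)
  have "(\<integral>x. (a i x - p) * (a k x - p) \<partial>?P) = (\<integral>x. a i x * a k x - p * a i x - p * a k x + p * p \<partial>?P)"
    by (intro Bochner_Integration.integral_cong) (simp_all add: left_diff_distrib right_diff_distrib)
  also have "\<dots> = (\<integral>x. a i x * a k x \<partial>?P) - p * (\<integral>x. a i x \<partial>?P) - p * (\<integral>x. a k x \<partial>?P) + p * p"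
    using a_int by (simp add: P.prob_space)
  finally have "(\<integral>x. (a i x - p) * (a k x - p) \<partial>?P) = 0"
    using integral_aa by (simp add: integral_a)
  then show ?thesis
    by (simp add: a_def p_def)
qed

lemma integral_emp_mean_indicator_dev_sq_le:
  fixes M :: "'z measure"
  assumes M: "prob_space M" and A[measurable]: "A \<in> sets M" and I: "finite I" "I \<noteq> {}"
  shows "integrable (PiM UNIV (\<lambda>_. M)) (\<lambda>x. (emp_mean I (indicator A) x - measure M A)\<^sup>2)"
    and "(\<integral>x. (emp_mean I (indicator A) x - measure M A)\<^sup>2 \<partial>PiM UNIV (\<lambda>_. M)) \<le> 1 / real (card I)"
proof -
  let ?P = "PiM (UNIV::nat set) (\<lambda>_. M)"
  interpret P: prob_space ?P using M by (intro prob_space_PiM) auto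
  define p where "p = measure M A"
  define n where "n = real (card I)"
  define b where "b i x = (indicator A (x i) :: real) - p" for i and x :: "nat \<Rightarrow> 'z"
  define f where "f x = emp_mean I (indicator A) x - p" for x
  have n: "0 < n"
    using I by (simp add: n_def card_gt_0_iff)
  have b_bound: "\<bar>b i x\<bar> \<le> 1" for i x
    using M by (auto simp: b_def p_def prob_space.prob_le_1 split: split_indicator)
  have b_int: "integrable ?P (\<lambda>x. b i x * b k x)" for i k
    using b_bound by (intro P.integrable_const_bound[where B=1]) (auto simp: b_def abs_mult intro!: mult_le_one)
  have b_sq: "(\<integral>x. (b i x)\<^sup>2 \<partial>?P) \<le> 1" for i
  proof -
    have "(\<integral>x. (b i x)\<^sup>2 \<partial>?P) \<le> (\<integral>x. 1 \<partial>?P)"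
      using b_int[of i i] b_bound abs_square_le_1
      by (intro integral_mono) (auto simp: power2_eq_square)
    then show ?thesis
      by (simp add: P.prob_space)
  qed
  have f_sq: "(f x)\<^sup>2 = (1 / n)\<^sup>2 * (\<Sum>i\<in>I. \<Sum>k\<in>I. b i x * b k x)" for x
  proof -
    have "f x = (1 / n) * (\<Sum>i\<in>I. b i x)"
      using n by (simp add: f_def emp_mean_def b_def n_def sum_subtractf field_simps)
    then show ?thesis
      by (simp add: power2_eq_square sum_product)
  qed
  have f_sq_int: "integrable ?P (\<lambda>x. (f x)\<^sup>2)"
    unfolding f_sq using b_int by simp
  have "(\<integral>x. (f x)\<^sup>2 \<partial>?P) = (1 / n)\<^sup>2 * (\<Sum>i\<in>I. \<Sum>k\<in>I. \<integral>x. b i x * b k x \<partial>?P)"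
    unfolding f_sq using b_int by simp
  also have "\<dots> = (1 / n)\<^sup>2 * (\<Sum>i\<in>I. \<integral>x. (b i x)\<^sup>2 \<partial>?P)"
  proof -
    have orth: "(\<integral>x. b i x * b k x \<partial>?P) = 0" if "i \<noteq> k" for i k
      using integral_indicator_PiM_centred_orthogonal[OF M A that] by (simp add: b_def p_def)
    have "(\<Sum>k\<in>I. \<integral>x. b i x * b k x \<partial>?P) = (\<integral>x. (b i x)\<^sup>2 \<partial>?P)" if "i \<in> I" for i
      using that I(1) orth
      by (subst sum.remove[of _ i]) (auto simp: power2_eq_square intro!: sum.neutral)
    then show ?thesis
      by simp
  qed
  also have "\<dots> \<le> (1 / n)\<^sup>2 * n"
  proof (rule mult_left_mono)
    have "(\<Sum>i\<in>I. \<integral>x. (b i x)\<^sup>2 \<partial>?P) \<le> (\<Sum>i\<in>I. 1)"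
      by (rule sum_mono) (rule b_sq)
    then show "(\<Sum>i\<in>I. \<integral>x. (b i x)\<^sup>2 \<partial>?P) \<le> n"
      by (simp add: n_def)
  qed simp
  finally have second_moment: "(\<integral>x. (f x)\<^sup>2 \<partial>?P) \<le> 1 / n"
    using n by (simp add: power2_eq_square)
  show "integrable ?P (\<lambda>x. (emp_mean I (indicator A) x - measure M A)\<^sup>2)"
    using f_sq_int by (simp add: f_def p_def)
  show "(\<integral>x. (emp_mean I (indicator A) x - measure M A)\<^sup>2 \<partial>?P) \<le> 1 / real (card I)"
    using second_moment by (simp add: f_def p_def n_def)
qed

lemma measure_emp_mean_indicator_dev_gt_le:
  fixes M :: "'z measure"
  assumes M: "prob_space M" and A[measurable]: "A \<in> sets M"
    and I: "finite I" "I \<noteq> {}" and "0 < \<eta>"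
  shows "measure (PiM UNIV (\<lambda>_. M))
      {x\<in>space (PiM UNIV (\<lambda>_. M)). \<eta> < \<bar>emp_mean I (indicator A) x - measure M A\<bar>}
    \<le> 1 / (real (card I) * \<eta>\<^sup>2)"
proof -
  let ?P = "PiM (UNIV::nat set) (\<lambda>_. M)"
  interpret P: prob_space ?P using M by (intro prob_space_PiM) auto
  define f where "f x = emp_mean I (indicator A) x - measure M A" for x
  have [measurable]: "f \<in> borel_measurable ?P"
    unfolding f_def emp_mean_def by measurable
  note second_moment = integral_emp_mean_indicator_dev_sq_le[OF M A I, folded f_def]
  have "measure ?P {x\<in>space ?P. \<eta> < \<bar>f x\<bar>} \<le> measure ?P {x\<in>space ?P. \<eta> \<le> \<bar>f x\<bar>}"
    by (rule P.finite_measure_mono) (auto, measurable)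
  also have "\<dots> \<le> (\<integral>x. (f x)\<^sup>2 \<partial>?P) / \<eta>\<^sup>2"
    using \<open>0 < \<eta>\<close> second_moment(1) by (intro P.second_moment_method) auto
  also have "\<dots> \<le> 1 / (real (card I) * \<eta>\<^sup>2)"
    using second_moment(2) \<open>0 < \<eta>\<close> by (simp add: divide_right_mono flip: divide_divide_eq_left)
  finally show ?thesis
    by (simp add: f_def)
qed

lemma eventually_finite_nonempty_if_card_at_top:
  assumes "filterlim (\<lambda>m. card (I m)) at_top sequentially"
  shows "eventually (\<lambda>m. finite (I m) \<and> I m \<noteq> {}) sequentially"
proof -
  have "eventually (\<lambda>m. 1 \<le> card (I m)) sequentially"
    using assms by (simp add: filterlim_at_top)
  then show ?thesis
    by eventually_elim (auto intro: card_ge_0_finite)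
qed

lemma tendsto_const_div_card_at_top:
  assumes "filterlim (\<lambda>m. card (I m)) at_top sequentially"
  shows "(\<lambda>m. C / real (card (I m))) \<longlonglongrightarrow> 0"
  by (intro tendsto_divide_0[OF tendsto_const] filterlim_at_top_imp_at_infinity
      filterlim_compose[OF filterlim_real_sequentially assms])

section \<open>Empirical and population covariance operators\<close>

definition emp_cov :: "nat set \<Rightarrow> ('z \<Rightarrow> 'h::real_inner) \<Rightarrow> (nat \<Rightarrow> 'z) \<Rightarrow> 'h \<Rightarrow> 'h" where
  "emp_cov I f x h = emp_mean I (\<lambda>z. inner h (f z) *\<^sub>R f z) x"

lemma bounded_linear_emp_cov: "bounded_linear (emp_cov I f x)"
  unfolding emp_cov_def[abs_def] emp_mean_def
  by (rule bounded_linear_const_scaleR, rule bounded_linear_sum, rule bounded_linear_scaleR_const,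
      rule bounded_linear_inner_left)

lemma norm_inner_scaleR_self_le:
  fixes h v :: "'h::real_inner"
  shows "norm (inner h v *\<^sub>R v) \<le> norm h * (norm v)\<^sup>2"
proof -
  have "norm (inner h v *\<^sub>R v) = \<bar>inner h v\<bar> * norm v"
    by simp
  also have "\<dots> \<le> norm h * norm v * norm v"
    by (intro mult_right_mono Cauchy_Schwarz_ineq2) auto
  finally show ?thesis
    by (simp add: power2_eq_square mult.assoc)
qed

text \<open>With \<open>d = a - b\<close>, the weighted AM-GM inequality \<open>2 \<parallel>d\<parallel> \<parallel>b\<parallel> \<le> \<parallel>d\<parallel>\<^sup>2 / t + t \<parallel>b\<parallel>\<^sup>2\<close>
  absorbs the cross terms.\<close>
lemma norm_inner_scaleR_self_diff_le:
  fixes a b h :: "'h::real_inner"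
  assumes "0 < t"
  shows "norm (inner h a *\<^sub>R a - inner h b *\<^sub>R b)
    \<le> norm h * ((1 + 1/t) * (norm (a - b))\<^sup>2 + t * (norm b)\<^sup>2)"
proof -
  define d where "d = a - b"
  have a: "a = b + d"
    by (simp add: d_def)
  have split: "inner h a *\<^sub>R a - inner h b *\<^sub>R b = inner h d *\<^sub>R d + inner h d *\<^sub>R b + inner h b *\<^sub>R d"
    unfolding a by (simp add: inner_add_right algebra_simps)
  have "norm (inner h a *\<^sub>R a - inner h b *\<^sub>R b)
      \<le> norm (inner h d *\<^sub>R d) + norm (inner h d *\<^sub>R b) + norm (inner h b *\<^sub>R d)"
    unfolding split by (intro norm_triangle_le add_mono norm_triangle_ineq order_refl)
  also have "\<dots> \<le> norm h * norm d * norm d + norm h * norm d * norm b + norm h * norm b * norm d"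
    by (intro add_mono) (auto intro!: mult_right_mono Cauchy_Schwarz_ineq2)
  also have "\<dots> = norm h * ((norm d)\<^sup>2 + 2 * norm d * norm b)"
    by (simp add: power2_eq_square algebra_simps)
  also have "\<dots> \<le> norm h * ((1 + 1/t) * (norm d)\<^sup>2 + t * (norm b)\<^sup>2)"
  proof (rule mult_left_mono)
    have "0 \<le> (norm d - t * norm b)\<^sup>2"
      by simp
    then have "t * (2 * norm d * norm b) \<le> (norm d)\<^sup>2 + t * (t * (norm b)\<^sup>2)"
      by (simp add: power2_eq_square algebra_simps)
    then have "2 * norm d * norm b \<le> (norm d)\<^sup>2 / t + t * (norm b)\<^sup>2"
      using assms by (simp add: field_simps)
    then show "(norm d)\<^sup>2 + 2 * norm d * norm b \<le> (1 + 1/t) * (norm d)\<^sup>2 + t * (norm b)\<^sup>2"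
      by (simp add: algebra_simps)
  qed simp
  finally show ?thesis
    by (simp add: d_def)
qed

lemma norm_emp_cov_diff_le:
  fixes f g :: "'z \<Rightarrow> 'h::real_inner"
  assumes "0 < t"
  shows "norm (emp_cov I f x h - emp_cov I g x h)
    \<le> norm h * ((1 + 1/t) * emp_mean I (\<lambda>z. (norm (f z - g z))\<^sup>2) x + t * emp_mean I (\<lambda>z. (norm (g z))\<^sup>2) x)"
proof -
  define c where "c = 1 / real (card I)"
  define a where "a = 1 + 1/t"
  let ?T = "\<lambda>v. inner h v *\<^sub>R v"
  have "norm (emp_cov I f x h - emp_cov I g x h) = c * norm (\<Sum>i\<in>I. ?T (f (x i)) - ?T (g (x i)))"
    by (simp add: emp_cov_def emp_mean_def c_def sum_subtractf flip: scaleR_diff_right)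
  also have "\<dots> \<le> c * (\<Sum>i\<in>I. norm h * (a * (norm (f (x i) - g (x i)))\<^sup>2 + t * (norm (g (x i)))\<^sup>2))"
    using assms unfolding a_def c_def
    by (intro mult_left_mono order_trans[OF norm_sum] sum_mono norm_inner_scaleR_self_diff_le) auto
  also have "\<dots> = norm h * (a * (c * (\<Sum>i\<in>I. (norm (f (x i) - g (x i)))\<^sup>2)) + t * (c * (\<Sum>i\<in>I. (norm (g (x i)))\<^sup>2)))"
    by (simp add: sum_distrib_left sum.distrib distrib_left mult_ac)
  finally show ?thesis
    by (simp add: emp_mean_def a_def c_def)
qed

lemma integrable_inner_scaleR_self:
  fixes f :: "'z \<Rightarrow> 'h::{real_inner, banach, second_countable_topology}"
  assumes [measurable]: "f \<in> borel_measurable M" and "integrable M (\<lambda>z. (norm (f z))\<^sup>2)"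
  shows "integrable M (\<lambda>z. inner h (f z) *\<^sub>R f z)"
proof (rule Bochner_Integration.integrable_bound)
  show "integrable M (\<lambda>z. norm h * (norm (f z))\<^sup>2)"
    using assms by simp
  show "AE z in M. norm (inner h (f z) *\<^sub>R f z) \<le> norm (norm h * (norm (f z))\<^sup>2)"
    using norm_inner_scaleR_self_le[of h "f _"] by (intro AE_I2) simp
qed measurable

lemma bounded_linear_Sigma_0:
  fixes f :: "'z \<Rightarrow> 'h::{real_inner, banach, second_countable_topology}"
  assumes [measurable]: "f \<in> borel_measurable M" and L2: "integrable M (\<lambda>z. (norm (f z))\<^sup>2)"
  shows "bounded_linear (Sigma_0 M f)"
proof (rule bounded_linear_intro[where K="\<integral>z. (norm (f z))\<^sup>2 \<partial>M"])
  note int = integrable_inner_scaleR_self[OF assms]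
  show "Sigma_0 M f (h + k) = Sigma_0 M f h + Sigma_0 M f k" for h k
    using int by (simp add: Sigma_0_def inner_add_left scaleR_add_left)
  show "Sigma_0 M f (r *\<^sub>R h) = r *\<^sub>R Sigma_0 M f h" for r h
    by (simp add: Sigma_0_def flip: scaleR_scaleR)
  show "norm (Sigma_0 M f h) \<le> norm h * (\<integral>z. (norm (f z))\<^sup>2 \<partial>M)" for h
  proof -
    have "norm (Sigma_0 M f h) \<le> (\<integral>z. norm (inner h (f z) *\<^sub>R f z) \<partial>M)"
      unfolding Sigma_0_def by (rule integral_norm_bound)
    also have "\<dots> \<le> (\<integral>z. norm h * (norm (f z))\<^sup>2 \<partial>M)"
      using integrable_norm[OF int] L2 by (intro integral_mono norm_inner_scaleR_self_le) auto
    finally show ?thesis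
      by simp
  qed
qed

lemma norm_Sigma_0_diff_le:
  fixes f g :: "'z \<Rightarrow> 'h::{real_inner, banach, second_countable_topology}"
  assumes "0 < t" and [measurable]: "f \<in> borel_measurable M" "g \<in> borel_measurable M"
    and L2: "integrable M (\<lambda>z. (norm (f z))\<^sup>2)" "integrable M (\<lambda>z. (norm (g z))\<^sup>2)"
      "integrable M (\<lambda>z. (norm (f z - g z))\<^sup>2)"
  shows "norm (Sigma_0 M f h - Sigma_0 M g h)
    \<le> norm h * ((1 + 1/t) * (\<integral>z. (norm (f z - g z))\<^sup>2 \<partial>M) + t * (\<integral>z. (norm (g z))\<^sup>2 \<partial>M))"
proof -
  have int: "integrable M (\<lambda>z. inner h (f z) *\<^sub>R f z)" "integrable M (\<lambda>z. inner h (g z) *\<^sub>R g z)"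
    using L2 by (auto intro: integrable_inner_scaleR_self)
  have "norm (Sigma_0 M f h - Sigma_0 M g h)
      \<le> (\<integral>z. norm (inner h (f z) *\<^sub>R f z - inner h (g z) *\<^sub>R g z) \<partial>M)"
    using int unfolding Sigma_0_def
    by (simp flip: Bochner_Integration.integral_diff add: integral_norm_bound)
  also have "\<dots> \<le> (\<integral>z. norm h * ((1 + 1/t) * (norm (f z - g z))\<^sup>2 + t * (norm (g z))\<^sup>2) \<partial>M)"
    using int L2 assms(1) by (intro integral_mono norm_inner_scaleR_self_diff_le) auto
  also have "\<dots> = norm h * ((1 + 1/t) * (\<integral>z. (norm (f z - g z))\<^sup>2 \<partial>M) + t * (\<integral>z. (norm (g z))\<^sup>2 \<partial>M))"
    using L2 by simp
  finally show ?thesis .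
qed

lemma simple_function_L2_approx:
  fixes f :: "'z \<Rightarrow> 'h::{banach, second_countable_topology}"
  assumes f[measurable]: "f \<in> borel_measurable M"
    and L2: "integrable M (\<lambda>z. (norm (f z))\<^sup>2)" and "0 < d"
  obtains \<psi> where "simple_function M \<psi>" "integrable M (\<lambda>z. (norm (\<psi> z))\<^sup>2)"
    "integrable M (\<lambda>z. (norm (\<psi> z - f z))\<^sup>2)" "(\<integral>z. (norm (\<psi> z - f z))\<^sup>2 \<partial>M) < d"
proof -
  obtain F where F_simple: "\<And>i. simple_function M (F i)"
    and F_lim: "\<And>z. z \<in> space M \<Longrightarrow> (\<lambda>i. F i z) \<longlonglongrightarrow> f z"
    and F_dist: "\<And>i z. z \<in> space M \<Longrightarrow> dist (F i z) 0 \<le> 2 * dist (f z) 0"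
    using borel_measurable_implies_sequence_metric[OF f, of 0] by blast
  have F_bound: "norm (F i z) \<le> 2 * norm (f z)" if "z \<in> space M" for i z
    using F_dist[OF that] by simp
  have [measurable]: "F i \<in> borel_measurable M" for i
    using F_simple by (rule borel_measurable_simple_function)
  have F_L2: "integrable M (\<lambda>z. (norm (F i z))\<^sup>2)" for i
  proof (rule Bochner_Integration.integrable_bound)
    show "integrable M (\<lambda>z. 4 * (norm (f z))\<^sup>2)"
      using L2 by simp
    show "AE z in M. norm ((norm (F i z))\<^sup>2) \<le> norm (4 * (norm (f z))\<^sup>2)"
    proof (rule AE_I2)
      fix z assume "z \<in> space M"
      then have "(norm (F i z))\<^sup>2 \<le> (2 * norm (f z))\<^sup>2"
        using F_bound by (intro power_mono) auto
      then show "norm ((norm (F i z))\<^sup>2) \<le> norm (4 * (norm (f z))\<^sup>2)"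
        by (simp add: power_mult_distrib)
    qed
  qed measurable
  have dominated: "AE z in M. norm ((norm (F i z - f z))\<^sup>2) \<le> 9 * (norm (f z))\<^sup>2" for i
  proof (rule AE_I2)
    fix z assume "z \<in> space M"
    then have "norm (F i z - f z) \<le> 3 * norm (f z)"
      using norm_triangle_ineq4[of "F i z" "f z"] F_bound[of z i] by simp
    then have "(norm (F i z - f z))\<^sup>2 \<le> (3 * norm (f z))\<^sup>2"
      by (intro power_mono) auto
    then show "norm ((norm (F i z - f z))\<^sup>2) \<le> 9 * (norm (f z))\<^sup>2"
      by (simp add: power_mult_distrib)
  qed
  have pointwise: "AE z in M. (\<lambda>i. (norm (F i z - f z))\<^sup>2) \<longlonglongrightarrow> 0"
  proof (rule AE_I2)
    fix z assume "z \<in> space M"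
    then have "(\<lambda>i. norm (F i z - f z)) \<longlonglongrightarrow> 0"
      using F_lim by (simp add: LIM_zero tendsto_norm_zero)
    from tendsto_mult[OF this this] show "(\<lambda>i. (norm (F i z - f z))\<^sup>2) \<longlonglongrightarrow> 0"
      by (simp add: power2_eq_square)
  qed
  have "integrable M (\<lambda>z. 9 * (norm (f z))\<^sup>2)"
    using L2 by simp
  note dc = this pointwise dominated
  have "(\<lambda>i. \<integral>z. (norm (F i z - f z))\<^sup>2 \<partial>M) \<longlonglongrightarrow> (\<integral>z. 0 \<partial>M)"
    by (rule integral_dominated_convergence[OF _ _ dc]) auto
  then obtain i where "(\<integral>z. (norm (F i z - f z))\<^sup>2 \<partial>M) < d"
    using order_tendstoD(2)[of _ 0 sequentially d] \<open>0 < d\<close> by (auto simp: eventually_sequentially)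
  moreover have "integrable M (\<lambda>z. (norm (F i z - f z))\<^sup>2)"
    by (rule integrable_dominated_convergence2[OF _ _ dc]) auto
  ultimately show ?thesis
    using F_simple F_L2 by (intro that[of "F i"])
qed

lemma sum_indicator_vimage_scaleR:
  fixes g :: "'a \<Rightarrow> 'b::real_vector"
  assumes "finite R" "range \<psi> \<subseteq> R"
  shows "(\<Sum>v\<in>R. indicator (\<psi> -` {v}) z *\<^sub>R g v) = g (\<psi> z)"
proof -
  have "(\<Sum>v\<in>R. indicator (\<psi> -` {v}) z *\<^sub>R g v) = (\<Sum>v\<in>R. if \<psi> z = v then g v else 0)"
    by (intro sum.cong) (auto simp: indicator_def)
  also have "\<dots> = g (\<psi> z)"
    using assms by (auto simp: sum.delta)
  finally show ?thesis .
qed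

lemma Sigma_0_simple_function:
  fixes \<psi> :: "'z \<Rightarrow> 'h::{real_inner, banach, second_countable_topology}"
  assumes M: "finite_measure M" and "space M = UNIV" and \<psi>: "simple_function M \<psi>"
  shows "Sigma_0 M \<psi> h = (\<Sum>v\<in>range \<psi>. measure M (\<psi> -` {v}) *\<^sub>R (inner h v *\<^sub>R v))"
proof -
  interpret finite_measure M by fact
  have R: "finite (range \<psi>)"
    using simple_functionD(1)[OF \<psi>] \<open>space M = UNIV\<close> by simp
  have [measurable]: "\<psi> -` {v} \<in> sets M" for v
    using simple_functionD(2)[OF \<psi>, of "{v}"] \<open>space M = UNIV\<close> by simp
  have T_eq: "inner h (\<psi> z) *\<^sub>R \<psi> z = (\<Sum>v\<in>range \<psi>. indicator (\<psi> -` {v}) z *\<^sub>R (inner h v *\<^sub>R v))" for z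
    by (rule sum_indicator_vimage_scaleR[OF R order_refl, symmetric])
  have "Sigma_0 M \<psi> h = (\<integral>z. (\<Sum>v\<in>range \<psi>. indicator (\<psi> -` {v}) z *\<^sub>R (inner h v *\<^sub>R v)) \<partial>M)"
    unfolding Sigma_0_def T_eq ..
  also have "\<dots> = (\<Sum>v\<in>range \<psi>. measure M (\<psi> -` {v}) *\<^sub>R (inner h v *\<^sub>R v))"
    by (subst Bochner_Integration.integral_sum) (auto simp: emeasure_eq_measure)
  finally show ?thesis .
qed

lemma emp_cov_simple_function:
  assumes "finite R" "range \<psi> \<subseteq> R"
  shows "emp_cov I \<psi> x h = (\<Sum>v\<in>R. emp_mean I (indicator (\<psi> -` {v})) x *\<^sub>R (inner h v *\<^sub>R v))"
proof -
  have "emp_cov I \<psi> x h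
      = (1 / real (card I)) *\<^sub>R (\<Sum>i\<in>I. \<Sum>v\<in>R. indicator (\<psi> -` {v}) (x i) *\<^sub>R (inner h v *\<^sub>R v))"
    by (simp only: emp_cov_def emp_mean_def sum_indicator_vimage_scaleR[OF assms])
  also have "\<dots> = (1 / real (card I)) *\<^sub>R (\<Sum>v\<in>R. (\<Sum>i\<in>I. indicator (\<psi> -` {v}) (x i)) *\<^sub>R (inner h v *\<^sub>R v))"
    by (simp only: sum.swap[of _ I] scaleR_sum_left)
  finally show ?thesis
    by (simp add: emp_mean_def scaleR_sum_right)
qed

lemma norm_emp_cov_sub_Sigma_0_simple_function_le:
  fixes \<psi> :: "'z \<Rightarrow> 'h::{real_inner, banach, second_countable_topology}"
  assumes "finite_measure M" "space M = UNIV" and \<psi>: "simple_function M \<psi>"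
  shows "norm (emp_cov I \<psi> x h - Sigma_0 M \<psi> h)
    \<le> norm h * (\<Sum>v\<in>range \<psi>. \<bar>emp_mean I (indicator (\<psi> -` {v})) x - measure M (\<psi> -` {v})\<bar> * (norm v)\<^sup>2)"
proof -
  have R: "finite (range \<psi>)"
    using simple_functionD(1)[OF \<psi>] \<open>space M = UNIV\<close> by simp
  have "norm (emp_cov I \<psi> x h - Sigma_0 M \<psi> h)
      = norm (\<Sum>v\<in>range \<psi>. (emp_mean I (indicator (\<psi> -` {v})) x - measure M (\<psi> -` {v})) *\<^sub>R (inner h v *\<^sub>R v))"
    unfolding emp_cov_simple_function[OF R order_refl] Sigma_0_simple_function[OF assms]
    by (simp only: sum_subtractf scaleR_diff_left)
  also have "\<dots> \<le> (\<Sum>v\<in>range \<psi>. \<bar>emp_mean I (indicator (\<psi> -` {v})) x - measure M (\<psi> -` {v})\<bar> * (norm h * (norm v)\<^sup>2))"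
    by (intro order_trans[OF norm_sum] sum_mono order_trans[OF eq_refl[OF norm_scaleR]]
        mult_left_mono norm_inner_scaleR_self_le abs_ge_zero)
  finally show ?thesis
    by (simp add: sum_distrib_left mult_ac)
qed

lemma norm_emp_cov_sub_Sigma_0_le:
  fixes f \<psi> :: "'z \<Rightarrow> 'h::{real_inner, banach, second_countable_topology}"
  assumes M: "finite_measure M" "space M = UNIV" and "0 < t"
    and [measurable]: "f \<in> borel_measurable M" and L2: "integrable M (\<lambda>z. (norm (f z))\<^sup>2)"
    and \<psi>: "simple_function M \<psi>" "integrable M (\<lambda>z. (norm (\<psi> z))\<^sup>2)"
      "integrable M (\<lambda>z. (norm (\<psi> z - f z))\<^sup>2)"
  shows "norm (emp_cov I f x h - Sigma_0 M f h) \<le> norm h *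
    ((1 + 1/t) * (emp_mean I (\<lambda>z. (norm (\<psi> z - f z))\<^sup>2) x + (\<integral>z. (norm (\<psi> z - f z))\<^sup>2 \<partial>M))
     + t * (emp_mean I (\<lambda>z. (norm (f z))\<^sup>2) x + (\<integral>z. (norm (f z))\<^sup>2 \<partial>M))
     + (\<Sum>v\<in>range \<psi>. \<bar>emp_mean I (indicator (\<psi> -` {v})) x - measure M (\<psi> -` {v})\<bar> * (norm v)\<^sup>2))"
proof -
  have [measurable]: "\<psi> \<in> borel_measurable M"
    using \<psi>(1) by (rule borel_measurable_simple_function)
  have split: "emp_cov I f x h - Sigma_0 M f h = - (emp_cov I \<psi> x h - emp_cov I f x h)
      + (emp_cov I \<psi> x h - Sigma_0 M \<psi> h) + (Sigma_0 M \<psi> h - Sigma_0 M f h)"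
    by simp
  have "norm (emp_cov I f x h - Sigma_0 M f h) \<le> norm (emp_cov I \<psi> x h - emp_cov I f x h)
      + norm (emp_cov I \<psi> x h - Sigma_0 M \<psi> h) + norm (Sigma_0 M \<psi> h - Sigma_0 M f h)"
    unfolding split by (intro norm_triangle_le add_mono order_refl) (simp only: norm_minus_cancel)
  also have "\<dots> \<le> norm h * ((1 + 1/t) * emp_mean I (\<lambda>z. (norm (\<psi> z - f z))\<^sup>2) x + t * emp_mean I (\<lambda>z. (norm (f z))\<^sup>2) x)
      + norm h * (\<Sum>v\<in>range \<psi>. \<bar>emp_mean I (indicator (\<psi> -` {v})) x - measure M (\<psi> -` {v})\<bar> * (norm v)\<^sup>2)
      + norm h * ((1 + 1/t) * (\<integral>z. (norm (\<psi> z - f z))\<^sup>2 \<partial>M) + t * (\<integral>z. (norm (f z))\<^sup>2 \<partial>M))"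
    using assms by (intro add_mono norm_emp_cov_diff_le norm_emp_cov_sub_Sigma_0_simple_function_le
        norm_Sigma_0_diff_le) auto
  finally show ?thesis
    by (simp add: algebra_simps)
qed

section \<open>Consistency of the cross-fitted covariance estimate\<close>

lemma measure_emp_freq_dev_gt_le:
  fixes \<psi> :: "'z \<Rightarrow> 'h::real_normed_vector"
  assumes M: "prob_space M" "space M = UNIV" and \<psi>: "simple_function M \<psi>" and "0 < c"
  obtains C where "\<And>I. finite I \<Longrightarrow> I \<noteq> {} \<Longrightarrow> measure (PiM UNIV (\<lambda>_. M)) {x\<in>space (PiM UNIV (\<lambda>_. M)).
      c < (\<Sum>v\<in>range \<psi>. \<bar>emp_mean I (indicator (\<psi> -` {v})) x - measure M (\<psi> -` {v})\<bar> * (norm v)\<^sup>2)}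
    \<le> C / real (card I)"
proof -
  let ?P = "PiM (UNIV::nat set) (\<lambda>_. M)"
  interpret P: prob_space ?P using M by (intro prob_space_PiM) auto
  define R where "R = range \<psi>"
  have R: "finite R" "0 < card R"
    using simple_functionD(1)[OF \<psi>] M(2) by (auto simp: R_def card_gt_0_iff)
  have [measurable]: "\<psi> -` {v} \<in> sets M" for v
    using simple_functionD(2)[OF \<psi>, of "{v}"] M(2) by simp
  define dev where "dev I v x = \<bar>emp_mean I (indicator (\<psi> -` {v})) x - measure M (\<psi> -` {v})\<bar>" for I v x
  have [measurable]: "dev I v \<in> borel_measurable ?P" for I v
    unfolding dev_def emp_mean_def by measurable
  define thr where "thr v = c / (real (card R) * ((norm v)\<^sup>2 + 1))" for v :: 'h
  have thr_pos: "0 < thr v" for v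
    using \<open>0 < c\<close> R by (simp add: thr_def add_nonneg_pos)
  have "thr v * (norm v)\<^sup>2 \<le> c / real (card R)" for v
  proof -
    have "thr v * (norm v)\<^sup>2 = c / real (card R) * ((norm v)\<^sup>2 / ((norm v)\<^sup>2 + 1))"
      by (simp add: thr_def)
    also have "\<dots> \<le> c / real (card R) * 1"
      using \<open>0 < c\<close> by (intro mult_left_mono) (auto simp: pos_divide_le_eq add_nonneg_pos)
    finally show ?thesis
      by simp
  qed
  then have thr_sum: "(\<Sum>v\<in>R. thr v * (norm v)\<^sup>2) \<le> c"
    using sum_mono[of R "\<lambda>v. thr v * (norm v)\<^sup>2" "\<lambda>_. c / real (card R)"] R
    by (simp split: if_splits)
  have cover: "{x\<in>space ?P. c < (\<Sum>v\<in>R. dev I v x * (norm v)\<^sup>2)} \<subseteq> (\<Union>v\<in>R. {x\<in>space ?P. thr v < dev I v x})" for I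
  proof (rule subsetI, rule ccontr)
    fix x assume "x \<in> {x\<in>space ?P. c < (\<Sum>v\<in>R. dev I v x * (norm v)\<^sup>2)}"
      and "x \<notin> (\<Union>v\<in>R. {x\<in>space ?P. thr v < dev I v x})"
    then have "c < (\<Sum>v\<in>R. dev I v x * (norm v)\<^sup>2)" "\<forall>v\<in>R. dev I v x \<le> thr v"
      by auto
    moreover have "(\<Sum>v\<in>R. dev I v x * (norm v)\<^sup>2) \<le> (\<Sum>v\<in>R. thr v * (norm v)\<^sup>2)"
      using calculation(2) by (intro sum_mono mult_right_mono) auto
    ultimately show False
      using thr_sum by linarith
  qed
  have "measure ?P {x\<in>space ?P. c < (\<Sum>v\<in>R. dev I v x * (norm v)\<^sup>2)}
      \<le> (\<Sum>v\<in>R. 1 / (thr v)\<^sup>2) / real (card I)"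
    if "finite I" "I \<noteq> {}" for I
  proof -
    have "measure ?P {x\<in>space ?P. c < (\<Sum>v\<in>R. dev I v x * (norm v)\<^sup>2)}
        \<le> measure ?P (\<Union>v\<in>R. {x\<in>space ?P. thr v < dev I v x})"
      using R cover by (intro P.finite_measure_mono) auto
    also have "\<dots> \<le> (\<Sum>v\<in>R. measure ?P {x\<in>space ?P. thr v < dev I v x})"
      using R by (intro P.finite_measure_subadditive_finite) auto
    also have "\<dots> \<le> (\<Sum>v\<in>R. 1 / (real (card I) * (thr v)\<^sup>2))"
      unfolding dev_def using M(1) that thr_pos
      by (intro sum_mono measure_emp_mean_indicator_dev_gt_le) auto
    finally show ?thesis
      by (simp add: sum_divide_distrib mult.commute)
  qed
  then show ?thesis
    by (intro that) (simp add: dev_def R_def)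
qed

lemma tendsto_measure_emp_freq_dev:
  fixes \<psi> :: "'z \<Rightarrow> 'h::real_normed_vector"
  assumes M: "prob_space M" "space M = UNIV" and \<psi>: "simple_function M \<psi>"
    and card: "filterlim (\<lambda>m. card (I m)) at_top sequentially" and "0 < c"
  shows "(\<lambda>m. measure (PiM UNIV (\<lambda>_. M)) {x\<in>space (PiM UNIV (\<lambda>_. M)).
      c < (\<Sum>v\<in>range \<psi>. \<bar>emp_mean (I m) (indicator (\<psi> -` {v})) x - measure M (\<psi> -` {v})\<bar> * (norm v)\<^sup>2)})
    \<longlonglongrightarrow> 0"
proof -
  obtain C where bound: "\<And>I. finite I \<Longrightarrow> I \<noteq> {} \<Longrightarrow> measure (PiM UNIV (\<lambda>_. M)) {x\<in>space (PiM UNIV (\<lambda>_. M)).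
      c < (\<Sum>v\<in>range \<psi>. \<bar>emp_mean I (indicator (\<psi> -` {v})) x - measure M (\<psi> -` {v})\<bar> * (norm v)\<^sup>2)}
    \<le> C / real (card I)"
    using measure_emp_freq_dev_gt_le[OF M \<psi> \<open>0 < c\<close>] by blast
  show ?thesis
  proof (rule tendsto_sandwich[OF _ _ tendsto_const tendsto_const_div_card_at_top[OF card]])
    show "eventually (\<lambda>m. measure (PiM UNIV (\<lambda>_. M)) {x\<in>space (PiM UNIV (\<lambda>_. M)).
        c < (\<Sum>v\<in>range \<psi>. \<bar>emp_mean (I m) (indicator (\<psi> -` {v})) x - measure M (\<psi> -` {v})\<bar> * (norm v)\<^sup>2)}
      \<le> C / real (card (I m))) sequentially"
      using eventually_finite_nonempty_if_card_at_top[OF card] by eventually_elim (use bound in auto)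
  qed simp
qed

lemma outer_prob_onorm_emp_cov_sub_Sigma_0_gt_le:
  fixes P0 :: "'z measure" and phi0 \<psi> :: "'z \<Rightarrow> 'h::{real_inner, banach, second_countable_topology}"
  assumes P0: "prob_space P0" "space P0 = UNIV"
    and [measurable]: "phi0 \<in> borel_measurable P0" and L2: "integrable P0 (\<lambda>z. (norm (phi0 z))\<^sup>2)"
    and \<psi>: "simple_function P0 \<psi>" "integrable P0 (\<lambda>z. (norm (\<psi> z))\<^sup>2)"
      "integrable P0 (\<lambda>z. (norm (\<psi> z - phi0 z))\<^sup>2)"
    and I: "finite I" "I \<noteq> {}" and "0 < t" "0 < c" "0 < K"
    and budget: "(1 + 1/t) * (c + (\<integral>z. (norm (\<psi> z - phi0 z))\<^sup>2 \<partial>P0))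
      + t * (K + (\<integral>z. (norm (phi0 z))\<^sup>2 \<partial>P0)) + q \<le> e"
  shows "outer_prob (PiM UNIV (\<lambda>_. P0)) {x\<in>space (PiM UNIV (\<lambda>_. P0)).
      ennreal e < ennreal (onorm (\<lambda>h. emp_cov I phi0 x h - Sigma_0 P0 phi0 h))}
    \<le> (\<integral>z. (norm (\<psi> z - phi0 z))\<^sup>2 \<partial>P0) / c + (\<integral>z. (norm (phi0 z))\<^sup>2 \<partial>P0) / K
      + measure (PiM UNIV (\<lambda>_. P0)) {x\<in>space (PiM UNIV (\<lambda>_. P0)).
          q < (\<Sum>v\<in>range \<psi>. \<bar>emp_mean I (indicator (\<psi> -` {v})) x - measure P0 (\<psi> -` {v})\<bar> * (norm v)\<^sup>2)}"
proof -
  let ?P = "PiM (UNIV::nat set) (\<lambda>_. P0)"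
  interpret P0: prob_space P0 by (rule P0(1))
  interpret P: prob_space ?P using P0(1) by (intro prob_space_PiM) auto
  have [measurable]: "\<psi> \<in> borel_measurable P0"
    using \<psi>(1) by (rule borel_measurable_simple_function)
  have [measurable]: "\<psi> -` {v} \<in> sets P0" for v
    using simple_functionD(2)[OF \<psi>(1), of "{v}"] P0(2) by simp
  define r where "r = (\<integral>z. (norm (\<psi> z - phi0 z))\<^sup>2 \<partial>P0)"
  define V where "V = (\<integral>z. (norm (phi0 z))\<^sup>2 \<partial>P0)"
  define Rr where "Rr x = emp_mean I (\<lambda>z. (norm (\<psi> z - phi0 z))\<^sup>2) x" for x
  define E where "E x = emp_mean I (\<lambda>z. (norm (phi0 z))\<^sup>2) x" for x
  define Q where "Q x = (\<Sum>v\<in>range \<psi>. \<bar>emp_mean I (indicator (\<psi> -` {v})) x - measure P0 (\<psi> -` {v})\<bar> * (norm v)\<^sup>2)" for x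
  have [measurable]: "Rr \<in> borel_measurable ?P" "E \<in> borel_measurable ?P" "Q \<in> borel_measurable ?P"
    unfolding Rr_def E_def Q_def emp_mean_def by measurable
  have nonneg: "0 \<le> r" "0 \<le> V" "0 \<le> Rr x" "0 \<le> E x" "0 \<le> Q x" for x
    by (auto simp: r_def V_def Rr_def E_def Q_def intro!: emp_mean_nonneg sum_nonneg)
  have bound: "onorm (\<lambda>h. emp_cov I phi0 x h - Sigma_0 P0 phi0 h)
      \<le> (1 + 1/t) * (Rr x + r) + t * (E x + V) + Q x" for x
    using nonneg \<open>0 < t\<close>
      norm_emp_cov_sub_Sigma_0_le[OF P0.finite_measure_axioms P0(2) \<open>0 < t\<close> _ L2 \<psi>, of I x]
    by (intro onorm_bound) (auto simp: Rr_def E_def Q_def r_def V_def mult.commute)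
  have "{x\<in>space ?P. ennreal e < ennreal (onorm (\<lambda>h. emp_cov I phi0 x h - Sigma_0 P0 phi0 h))}
      \<subseteq> {x\<in>space ?P. c < Rr x} \<union> {x\<in>space ?P. K < E x} \<union> {x\<in>space ?P. q < Q x}"
  proof (intro subsetI, rule ccontr)
    fix x assume x: "x \<in> {x\<in>space ?P. ennreal e < ennreal (onorm (\<lambda>h. emp_cov I phi0 x h - Sigma_0 P0 phi0 h))}"
      and "x \<notin> {x\<in>space ?P. c < Rr x} \<union> {x\<in>space ?P. K < E x} \<union> {x\<in>space ?P. q < Q x}"
    then have "Rr x \<le> c" "E x \<le> K" "Q x \<le> q"
      by auto
    then have "(1 + 1/t) * (Rr x + r) + t * (E x + V) + Q x \<le> (1 + 1/t) * (c + r) + t * (K + V) + q"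
      using \<open>0 < t\<close> by (intro add_mono mult_left_mono) auto
    then have "onorm (\<lambda>h. emp_cov I phi0 x h - Sigma_0 P0 phi0 h) \<le> e"
      using bound[of x] budget unfolding r_def V_def by linarith
    then show False
      using x by (auto dest: ennreal_leI leD)
  qed
  then have "outer_prob ?P {x\<in>space ?P. ennreal e < ennreal (onorm (\<lambda>h. emp_cov I phi0 x h - Sigma_0 P0 phi0 h))}
      \<le> measure ?P ({x\<in>space ?P. c < Rr x} \<union> {x\<in>space ?P. K < E x} \<union> {x\<in>space ?P. q < Q x})"
    by (intro outer_prob_le_measure) auto
  also have "\<dots> \<le> measure ?P {x\<in>space ?P. c < Rr x} + measure ?P {x\<in>space ?P. K < E x}
      + measure ?P {x\<in>space ?P. q < Q x}"
    by (intro order_trans[OF measure_Un_le] add_mono measure_Un_le order_refl) auto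
  also have "\<dots> \<le> r / c + V / K + measure ?P {x\<in>space ?P. q < Q x}"
    using P0(1) I \<psi>(3) L2 \<open>0 < c\<close> \<open>0 < K\<close>
    by (intro add_mono order_refl) (auto simp: Rr_def E_def r_def V_def intro!: measure_emp_mean_gt_le_integral)
  finally show ?thesis
    by (simp add: r_def V_def Q_def)
qed

lemma op_one_emp_cov_sub_Sigma_0:
  fixes P0 :: "'z measure" and phi0 :: "'z \<Rightarrow> 'h::{real_inner, banach, second_countable_topology}"
  assumes P0: "prob_space P0" "space P0 = UNIV"
    and phi0[measurable]: "phi0 \<in> borel_measurable P0" and L2: "integrable P0 (\<lambda>z. (norm (phi0 z))\<^sup>2)"
    and card: "filterlim (\<lambda>m. card (I m)) at_top sequentially"
  shows "op_one (PiM UNIV (\<lambda>_. P0))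
    (\<lambda>m x. ennreal (onorm (\<lambda>h. emp_cov (I m) phi0 x h - Sigma_0 P0 phi0 h)))"
proof (rule op_oneI)
  fix e \<eta> :: real assume "0 < e" "0 < \<eta>"
  \<comment> \<open>\<open>K\<close>, \<open>t\<close>, \<open>c\<close> and \<open>\<psi>\<close> are chosen in this order so that the budget of the previous lemma
    holds with \<open>q = e / 4\<close> and each of its three error terms is eventually below \<open>\<eta> / 4\<close>.\<close>
  define V where "V = (\<integral>z. (norm (phi0 z))\<^sup>2 \<partial>P0)"
  define K where "K = 4 * (V + 1) / \<eta>"
  define t where "t = e / (4 * (K + V))"
  define c where "c = e / (8 * (1 + 1/t))"
  have "0 \<le> V"
    by (simp add: V_def)
  then have K: "0 < K" "V / K \<le> \<eta> / 4"
    using \<open>0 < \<eta>\<close> by (auto simp: K_def field_simps)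
  have "0 < K + V"
    using K \<open>0 \<le> V\<close> by simp
  then have t: "0 < t" "t * (K + V) = e / 4"
    using \<open>0 < e\<close> unfolding t_def by (simp_all add: field_simps)
  have halves: "a * (2 * (e / (8 * a))) = e / 4" if "0 < a" for a :: real
    using that by (simp add: field_simps)
  have "0 < 1 + 1/t"
    using t(1) by (simp add: add_pos_pos)
  have c_pos: "0 < c"
    using \<open>0 < e\<close> \<open>0 < 1 + 1/t\<close> unfolding c_def by simp
  have c_budget: "(1 + 1/t) * (2 * c) = e / 4"
    unfolding c_def using \<open>0 < 1 + 1/t\<close> by (rule halves)
  note c = c_pos c_budget
  obtain \<psi> where \<psi>: "simple_function P0 \<psi>" "integrable P0 (\<lambda>z. (norm (\<psi> z))\<^sup>2)"
      "integrable P0 (\<lambda>z. (norm (\<psi> z - phi0 z))\<^sup>2)"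
    and r: "(\<integral>z. (norm (\<psi> z - phi0 z))\<^sup>2 \<partial>P0) < min c (c * \<eta> / 4)"
    using simple_function_L2_approx[OF phi0 L2, of "min c (c * \<eta> / 4)"]
      c \<open>0 < \<eta>\<close> by auto
  have budget: "(1 + 1/t) * (c + (\<integral>z. (norm (\<psi> z - phi0 z))\<^sup>2 \<partial>P0)) + t * (K + V) + e / 4 \<le> e"
  proof -
    have "(1 + 1/t) * (c + (\<integral>z. (norm (\<psi> z - phi0 z))\<^sup>2 \<partial>P0)) \<le> (1 + 1/t) * (2 * c)"
      using r t by (intro mult_left_mono) auto
    then show ?thesis
      using c t \<open>0 < e\<close> by linarith
  qed
  have r_div_c: "(\<integral>z. (norm (\<psi> z - phi0 z))\<^sup>2 \<partial>P0) / c \<le> \<eta> / 4"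
    using r c by (simp add: field_simps)
  have freq: "eventually (\<lambda>m. measure (PiM UNIV (\<lambda>_. P0)) {x\<in>space (PiM UNIV (\<lambda>_. P0)).
      e / 4 < (\<Sum>v\<in>range \<psi>. \<bar>emp_mean (I m) (indicator (\<psi> -` {v})) x - measure P0 (\<psi> -` {v})\<bar> * (norm v)\<^sup>2)}
    < \<eta> / 4) sequentially"
    using \<open>0 < e\<close> \<open>0 < \<eta>\<close>
    by (intro order_tendstoD(2)[OF tendsto_measure_emp_freq_dev[OF P0 \<psi>(1) card]]) auto
  show "eventually (\<lambda>m. outer_prob (PiM UNIV (\<lambda>_. P0)) {x\<in>space (PiM UNIV (\<lambda>_. P0)).
      ennreal e < ennreal (onorm (\<lambda>h. emp_cov (I m) phi0 x h - Sigma_0 P0 phi0 h))} \<le> \<eta>) sequentially"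
    using eventually_finite_nonempty_if_card_at_top[OF card] freq
  proof eventually_elim
    case (elim m)
    then have "finite (I m)" "I m \<noteq> {}"
      by auto
    from outer_prob_onorm_emp_cov_sub_Sigma_0_gt_le[OF P0 phi0 L2 \<psi> this t(1) c(1) K(1)
        budget[unfolded V_def]]
    show ?case
      using elim r_div_c K(2) \<open>0 < \<eta>\<close> unfolding V_def by linarith
  qed
qed

lemma outer_prob_onorm_emp_cov_diff_gt_le:
  fixes P0 :: "'z measure" and phi0 :: "'z \<Rightarrow> 'h::{real_inner, banach, second_countable_topology}"
    and f :: "(nat \<Rightarrow> 'z) \<Rightarrow> 'z \<Rightarrow> 'h"
  assumes P0: "prob_space P0"
    and f: "(\<lambda>(x, z). f x z) \<in> borel_measurable (PiM UNIV (\<lambda>_. P0) \<Otimes>\<^sub>M P0)"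
    and f_dep: "\<And>x y. \<forall>k\<in>J. x k = y k \<Longrightarrow> f x = f y"
    and I: "finite I" "I \<noteq> {}" "I \<inter> J = {}"
    and [measurable]: "phi0 \<in> borel_measurable P0" and L2: "integrable P0 (\<lambda>z. (norm (phi0 z))\<^sup>2)"
    and "0 < t" "0 < c" "0 < K" "0 \<le> \<delta>" and budget: "(1 + 1/t) * c + t * K \<le> e"
  shows "outer_prob (PiM UNIV (\<lambda>_. P0)) {x\<in>space (PiM UNIV (\<lambda>_. P0)).
      ennreal e < ennreal (onorm (\<lambda>h. emp_cov I (f x) x h - emp_cov I phi0 x h))}
    \<le> measure (PiM UNIV (\<lambda>_. P0)) {x\<in>space (PiM UNIV (\<lambda>_. P0)).
        ennreal \<delta> < (\<integral>\<^sup>+z. ennreal ((norm (f x z - phi0 z))\<^sup>2) \<partial>P0)}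
      + \<delta> / c + (\<integral>z. (norm (phi0 z))\<^sup>2 \<partial>P0) / K"
proof -
  let ?P = "PiM (UNIV::nat set) (\<lambda>_. P0)"
  interpret P: prob_space ?P using P0 by (intro prob_space_PiM) auto
  have [measurable]: "(\<lambda>p. f (fst p) (snd p)) \<in> borel_measurable (?P \<Otimes>\<^sub>M P0)"
    using f by (simp add: case_prod_beta')
  have G: "(\<lambda>(x, z). (norm (f x z - phi0 z))\<^sup>2) \<in> borel_measurable (?P \<Otimes>\<^sub>M P0)"
    unfolding case_prod_beta' by measurable
  have G_dep: "(\<lambda>z. (norm (f x z - phi0 z))\<^sup>2) = (\<lambda>z. (norm (f y z - phi0 z))\<^sup>2)"
    if "\<forall>k\<in>J. x k = y k" for x y
    using f_dep[OF that] by simp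
  define D where "D x = emp_mean I (\<lambda>z. (norm (f x z - phi0 z))\<^sup>2) x" for x
  define E where "E x = emp_mean I (\<lambda>z. (norm (phi0 z))\<^sup>2) x" for x
  have [measurable]: "D \<in> borel_measurable ?P" "E \<in> borel_measurable ?P"
    unfolding D_def[abs_def] E_def[abs_def] using borel_measurable_emp_mean[OF G]
    by (auto simp: emp_mean_def)
  have bound: "onorm (\<lambda>h. emp_cov I (f x) x h - emp_cov I phi0 x h) \<le> (1 + 1/t) * D x + t * E x" for x
  proof (rule onorm_bound)
    show "0 \<le> (1 + 1/t) * D x + t * E x"
      using \<open>0 < t\<close> unfolding D_def E_def
      by (intro add_nonneg_nonneg mult_nonneg_nonneg emp_mean_nonneg) auto
    show "norm (emp_cov I (f x) x h - emp_cov I phi0 x h) \<le> ((1 + 1/t) * D x + t * E x) * norm h" for h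
      using norm_emp_cov_diff_le[OF \<open>0 < t\<close>, where I=I and f="f x" and g=phi0 and x=x]
      by (simp add: D_def E_def mult.commute)
  qed
  have "{x\<in>space ?P. ennreal e < ennreal (onorm (\<lambda>h. emp_cov I (f x) x h - emp_cov I phi0 x h))}
      \<subseteq> {x\<in>space ?P. c < D x} \<union> {x\<in>space ?P. K < E x}"
  proof (intro subsetI, rule ccontr)
    fix x assume x: "x \<in> {x\<in>space ?P. ennreal e < ennreal (onorm (\<lambda>h. emp_cov I (f x) x h - emp_cov I phi0 x h))}"
      and "x \<notin> {x\<in>space ?P. c < D x} \<union> {x\<in>space ?P. K < E x}"
    then have "(1 + 1/t) * D x + t * E x \<le> (1 + 1/t) * c + t * K"
      using \<open>0 < t\<close> by (intro add_mono mult_left_mono) auto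
    then have "onorm (\<lambda>h. emp_cov I (f x) x h - emp_cov I phi0 x h) \<le> e"
      using bound[of x] budget by linarith
    then show False
      using x by (auto dest: ennreal_leI leD)
  qed
  then have "outer_prob ?P {x\<in>space ?P. ennreal e < ennreal (onorm (\<lambda>h. emp_cov I (f x) x h - emp_cov I phi0 x h))}
      \<le> measure ?P ({x\<in>space ?P. c < D x} \<union> {x\<in>space ?P. K < E x})"
    by (intro outer_prob_le_measure) auto
  also have "\<dots> \<le> measure ?P {x\<in>space ?P. c < D x} + measure ?P {x\<in>space ?P. K < E x}"
    by (intro measure_Un_le) auto
  also have "\<dots> \<le> (measure ?P {x\<in>space ?P. ennreal \<delta> < (\<integral>\<^sup>+z. ennreal ((norm (f x z - phi0 z))\<^sup>2) \<partial>P0)} + \<delta> / c)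
      + (\<integral>z. (norm (phi0 z))\<^sup>2 \<partial>P0) / K"
  proof (rule add_mono)
    show "measure ?P {x\<in>space ?P. c < D x}
        \<le> measure ?P {x\<in>space ?P. ennreal \<delta> < (\<integral>\<^sup>+z. ennreal ((norm (f x z - phi0 z))\<^sup>2) \<partial>P0)} + \<delta> / c"
      unfolding D_def by (rule measure_emp_mean_gt_le[OF P0 I G _ G_dep \<open>0 < c\<close> \<open>0 \<le> \<delta>\<close>]) simp
    show "measure ?P {x\<in>space ?P. K < E x} \<le> (\<integral>z. (norm (phi0 z))\<^sup>2 \<partial>P0) / K"
      unfolding E_def using L2 \<open>0 < K\<close> by (intro measure_emp_mean_gt_le_integral[OF P0 I(1,2)]) auto
  qed
  finally show ?thesis
    by simp
qed

lemma op_one_emp_cov_diff: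
  fixes P0 :: "'z measure" and phi0 :: "'z \<Rightarrow> 'h::{real_inner, banach, second_countable_topology}"
    and f :: "nat \<Rightarrow> (nat \<Rightarrow> 'z) \<Rightarrow> 'z \<Rightarrow> 'h"
  assumes P0: "prob_space P0"
    and f: "\<And>m. (\<lambda>(x, z). f m x z) \<in> borel_measurable (PiM UNIV (\<lambda>_. P0) \<Otimes>\<^sub>M P0)"
    and f_dep: "\<And>m x y. \<forall>k\<in>J m. x k = y k \<Longrightarrow> f m x = f m y"
    and disjoint: "\<And>m. I m \<inter> J m = {}" and card: "filterlim (\<lambda>m. card (I m)) at_top sequentially"
    and phi0[measurable]: "phi0 \<in> borel_measurable P0" and L2: "integrable P0 (\<lambda>z. (norm (phi0 z))\<^sup>2)"
    and consistent: "op_one (PiM UNIV (\<lambda>_. P0)) (\<lambda>m x. L2norm P0 (\<lambda>z. f m x z - phi0 z))"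
  shows "op_one (PiM UNIV (\<lambda>_. P0))
    (\<lambda>m x. ennreal (onorm (\<lambda>h. emp_cov (I m) (f m x) x h - emp_cov (I m) phi0 x h)))"
proof (rule op_oneI)
  let ?P = "PiM (UNIV::nat set) (\<lambda>_. P0)"
  interpret P0: prob_space P0 by (rule P0)
  interpret P: prob_space ?P using P0 by (intro prob_space_PiM) auto
  fix e \<eta> :: real assume "0 < e" "0 < \<eta>"
  define V where "V = (\<integral>z. (norm (phi0 z))\<^sup>2 \<partial>P0)"
  define K where "K = 4 * (V + 1) / \<eta>"
  define t where "t = e / (2 * K)"
  define c where "c = e / (2 * (1 + 1/t))"
  define \<delta> where "\<delta> = c * \<eta> / 4"
  have halves: "a * (e / (2 * a)) = e / 2" if "0 < a" for a :: real
    using that by simp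
  have "0 \<le> V"
    by (simp add: V_def)
  then have K: "0 < K" "V / K \<le> \<eta> / 4"
    using \<open>0 < \<eta>\<close> by (auto simp: K_def field_simps)
  have t: "0 < t" "t * K = e / 2"
    using \<open>0 < e\<close> K(1) halves[of K] by (simp_all add: t_def mult.commute)
  have "0 < 1 + 1/t"
    using t(1) by (simp add: add_pos_pos)
  then have c: "0 < c" "(1 + 1/t) * c = e / 2"
    using \<open>0 < e\<close> halves[of "1 + 1/t"] by (simp_all add: c_def)
  have budget: "(1 + 1/t) * c + t * K \<le> e"
    using c(2) t(2) by simp
  have \<delta>: "0 < \<delta>" "\<delta> / c = \<eta> / 4"
    using c(1) \<open>0 < \<eta>\<close> by (simp_all add: \<delta>_def)
  have [measurable]: "(\<lambda>p. f m (fst p) (snd p)) \<in> borel_measurable (?P \<Otimes>\<^sub>M P0)" for m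
    using f[of m] by (simp add: case_prod_beta')
  have "(\<lambda>p. ennreal ((norm (f m (fst p) (snd p) - phi0 (snd p)))\<^sup>2)) \<in> borel_measurable (?P \<Otimes>\<^sub>M P0)" for m
    by measurable
  from P0.borel_measurable_nn_integral_fst[OF this]
  have "(\<lambda>x. \<integral>\<^sup>+z. ennreal ((norm (f m x z - phi0 z))\<^sup>2) \<partial>P0) \<in> borel_measurable ?P" for m
    by simp
  then have "eventually (\<lambda>m. measure ?P {x\<in>space ?P.
      ennreal \<delta> < (\<integral>\<^sup>+z. ennreal ((norm (f m x z - phi0 z))\<^sup>2) \<partial>P0)} < \<eta> / 4) sequentially"
    using \<delta>(1) \<open>0 < \<eta>\<close>
    by (intro order_tendstoD(2)[OF op_one_L2normD[OF
          P.finite_measure_axioms consistent]]) auto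
  then show "eventually (\<lambda>m. outer_prob ?P {x\<in>space ?P.
      ennreal e < ennreal (onorm (\<lambda>h. emp_cov (I m) (f m x) x h - emp_cov (I m) phi0 x h))} \<le> \<eta>) sequentially"
    using eventually_finite_nonempty_if_card_at_top[OF card]
  proof eventually_elim
    case (elim m)
    then have "finite (I m)" "I m \<noteq> {}"
      by auto
    from outer_prob_onorm_emp_cov_diff_gt_le[OF P0 f[of m] f_dep[of m] this disjoint[of m] phi0 L2
        t(1) c(1) K(1) less_imp_le[OF \<delta>(1)] budget]
    show ?case
      using elim K(2) \<delta>(2) \<open>0 < \<eta>\<close> unfolding V_def by linarith
  qed
qed

lemma op_one_cross_fit_emp_cov_sub_Sigma_0:
  fixes P0 :: "'z measure" and phi0 :: "'z \<Rightarrow> 'h::{real_inner, banach, second_countable_topology}"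
    and f :: "nat \<Rightarrow> (nat \<Rightarrow> 'z) \<Rightarrow> 'z \<Rightarrow> 'h"
  assumes P0: "prob_space P0" "space P0 = UNIV"
    and f: "\<And>m. (\<lambda>(x, z). f m x z) \<in> borel_measurable (PiM UNIV (\<lambda>_. P0) \<Otimes>\<^sub>M P0)"
    and f_dep: "\<And>m x y. \<forall>k\<in>J m. x k = y k \<Longrightarrow> f m x = f m y"
    and disjoint: "\<And>m. I m \<inter> J m = {}" and card: "filterlim (\<lambda>m. card (I m)) at_top sequentially"
    and phi0: "phi0 \<in> borel_measurable P0" and L2: "integrable P0 (\<lambda>z. (norm (phi0 z))\<^sup>2)"
    and consistent: "op_one (PiM UNIV (\<lambda>_. P0)) (\<lambda>m x. L2norm P0 (\<lambda>z. f m x z - phi0 z))"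
  shows "op_one (PiM UNIV (\<lambda>_. P0))
    (\<lambda>m x. ennreal (onorm (\<lambda>h. emp_cov (I m) (f m x) x h - Sigma_0 P0 phi0 h)))"
proof (rule op_one_add[OF op_one_emp_cov_diff[OF P0(1) f f_dep disjoint card phi0 L2 consistent]
      op_one_emp_cov_sub_Sigma_0[OF P0 phi0 L2 card]])
  fix m x
  let ?D = "\<lambda>h. emp_cov (I m) (f m x) x h - emp_cov (I m) phi0 x h"
  let ?E = "\<lambda>h. emp_cov (I m) phi0 x h - Sigma_0 P0 phi0 h"
  have "onorm (\<lambda>h. emp_cov (I m) (f m x) x h - Sigma_0 P0 phi0 h) = onorm (\<lambda>h. ?D h + ?E h)"
    by simp
  also have "\<dots> \<le> onorm ?D + onorm ?E"
    using bounded_linear_Sigma_0[OF phi0 L2]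
    by (intro onorm_triangle bounded_linear_sub bounded_linear_emp_cov)
  finally show "ennreal (onorm (\<lambda>h. emp_cov (I m) (f m x) x h - Sigma_0 P0 phi0 h))
      \<le> ennreal (onorm ?D) + ennreal (onorm ?E)"
    using bounded_linear_Sigma_0[OF phi0 L2]
    by (simp add: ennreal_leI bounded_linear_sub bounded_linear_emp_cov onorm_pos_le flip: ennreal_plus)
qed

lemma onorm_Sigma_n_sub_Sigma_0_le:
  assumes "bounded_linear (Sigma_0 P0 phi0)"
  shows "onorm (\<lambda>h. Sigma_n m phi x h - Sigma_0 P0 phi0 h)
    \<le> onorm (\<lambda>h. emp_cov {m..<2*m} (phi m 1 x) x h - Sigma_0 P0 phi0 h)
      + onorm (\<lambda>h. emp_cov {0..<m} (phi m 2 x) x h - Sigma_0 P0 phi0 h)"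
proof -
  let ?A = "\<lambda>h. emp_cov {m..<2*m} (phi m 1 x) x h - Sigma_0 P0 phi0 h"
  let ?B = "\<lambda>h. emp_cov {0..<m} (phi m 2 x) x h - Sigma_0 P0 phi0 h"
  have lin: "bounded_linear ?A" "bounded_linear ?B"
    using assms by (auto intro: bounded_linear_sub bounded_linear_emp_cov)
  have "(\<lambda>h. Sigma_n m phi x h - Sigma_0 P0 phi0 h) = (\<lambda>h. (1/2) *\<^sub>R ?A h + (1/2) *\<^sub>R ?B h)"
  proof (rule ext)
    fix h
    have "Sigma_n m phi x h = (1/2) *\<^sub>R (emp_cov {m..<2*m} (phi m 1 x) x h + emp_cov {0..<m} (phi m 2 x) x h)"
      by (simp add: Sigma_n_def emp_cov_def emp_mean_def)
    then show "Sigma_n m phi x h - Sigma_0 P0 phi0 h = (1/2) *\<^sub>R ?A h + (1/2) *\<^sub>R ?B h"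
      by (simp add: algebra_simps flip: scaleR_add_left)
  qed
  then have "onorm (\<lambda>h. Sigma_n m phi x h - Sigma_0 P0 phi0 h)
      \<le> onorm (\<lambda>h. (1/2) *\<^sub>R ?A h) + onorm (\<lambda>h. (1/2) *\<^sub>R ?B h)"
    using lin by (simp add: onorm_triangle bounded_linear_const_scaleR)
  also have "\<dots> = onorm ?A / 2 + onorm ?B / 2"
    using lin by (simp add: onorm_scaleR)
  also have "\<dots> \<le> onorm ?A + onorm ?B"
    using onorm_pos_le[OF lin(1)] onorm_pos_le[OF lin(2)] by linarith
  finally show ?thesis .
qed

theorem lemmaS12:
  fixes P0 :: "'z::polish_space measure"
    and phi0 :: "'z \<Rightarrow> 'h::{real_inner,banach,second_countable_topology}"
    and phi :: "nat \<Rightarrow> nat \<Rightarrow> (nat \<Rightarrow> 'z) \<Rightarrow> 'z \<Rightarrow> 'h"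
  assumes P0: "prob_space P0" "sets P0 = sets borel"
    and phi0_meas: "phi0 \<in> borel_measurable P0"
    and phi_meas: "\<And>m j. j \<in> {1,2} \<Longrightarrow>
          (\<lambda>(x, z). phi m j x z) \<in> borel_measurable ((PiM UNIV (\<lambda>_. P0)) \<Otimes>\<^sub>M P0)"
    and phi1_dep: "\<And>m x y. (\<forall>i<m. x i = y i) \<Longrightarrow> phi m 1 x = phi m 1 y"
    and phi2_dep: "\<And>m x y. (\<forall>i\<in>{m..<2*m}. x i = y i) \<Longrightarrow> phi m 2 x = phi m 2 y"
    and phi0_L2: "L2norm P0 phi0 < \<infinity>"
    and consist: "\<And>j. j \<in> {1,2} \<Longrightarrow>
          op_one (PiM UNIV (\<lambda>_. P0)) (\<lambda>m x. L2norm P0 (\<lambda>z. phi m j x z - phi0 z))"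
  shows "op_one (PiM UNIV (\<lambda>_. P0))
           (\<lambda>m x. ennreal (onorm (\<lambda>h. Sigma_n m phi x h - Sigma_0 P0 phi0 h)))"
proof -
  have space: "space P0 = UNIV"
    using sets_eq_imp_space_eq[OF P0(2)] by simp
  have L2: "integrable P0 (\<lambda>z. (norm (phi0 z))\<^sup>2)"
    using phi0_meas phi0_L2 by (rule integrable_power2_norm_if_L2norm_finite)
  have card: "filterlim (\<lambda>m. card {m..<2*m}) at_top sequentially"
    "filterlim (\<lambda>m. card {0..<m}) at_top sequentially"
    by (simp_all add: mult_2 filterlim_ident)
  have half1: "op_one (PiM UNIV (\<lambda>_. P0))
      (\<lambda>m x. ennreal (onorm (\<lambda>h. emp_cov {m..<2*m} (phi m 1 x) x h - Sigma_0 P0 phi0 h)))"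
    using phi_meas phi1_dep consist
    by (intro op_one_cross_fit_emp_cov_sub_Sigma_0[OF P0(1) space _ _ _ card(1) phi0_meas L2,
          where J="\<lambda>m. {..<m}"]) auto
  have half2: "op_one (PiM UNIV (\<lambda>_. P0))
      (\<lambda>m x. ennreal (onorm (\<lambda>h. emp_cov {0..<m} (phi m 2 x) x h - Sigma_0 P0 phi0 h)))"
    using phi_meas phi2_dep consist
    by (intro op_one_cross_fit_emp_cov_sub_Sigma_0[OF P0(1) space _ _ _ card(2) phi0_meas L2,
          where J="\<lambda>m. {m..<2*m}"]) auto
  have Sigma_0: "bounded_linear (Sigma_0 P0 phi0)"
    using phi0_meas L2 by (rule bounded_linear_Sigma_0)
  show ?thesis
  proof (rule op_one_add[OF half1 half2])
    show "ennreal (onorm (\<lambda>h. Sigma_n m phi x h - Sigma_0 P0 phi0 h))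
      \<le> ennreal (onorm (\<lambda>h. emp_cov {m..<2*m} (phi m 1 x) x h - Sigma_0 P0 phi0 h))
        + ennreal (onorm (\<lambda>h. emp_cov {0..<m} (phi m 2 x) x h - Sigma_0 P0 phi0 h))" for m x
      using onorm_Sigma_n_sub_Sigma_0_le[OF Sigma_0, of m phi x] Sigma_0
      by (simp add: ennreal_leI onorm_pos_le bounded_linear_sub bounded_linear_emp_cov flip: ennreal_plus)
  qed
qed

end
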